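(* Let $\alpha>\beta\ge2$ be two real numbers with $\alpha/\beta\in\mathbb{Q} \setminus \mathbb{N}$ and $[\alpha,\beta]\ge\min\{\alpha^2,10^\beta\}$. Then, as $T\to\infty$, \[ \frac{\mathbb{P}_T\big(\mathcal{N}_\alpha\cap \mathcal{N}_\beta\big)}{\mathbb{P}_T\big(\mathcal{N}_\alpha\big) \mathbb{P}_T\big(\mathcal{N}_\beta\big)} \ \lesssim \ 1 +O\bigg(\frac{\log(2\beta)}{\alpha/\beta}+\frac{1}{\beta}\bigg), \] i.e. there is an absolute constant $c>0$ such that the $\limsup_{T\to\infty}$ of the left-hand side is at most $1+c\big(\frac{\log(2\beta)}{\alpha/\beta}+\frac1\beta\big)$.
   Context: Height: for rational $\rho=a/q>0$ with $\gcd(a,q)=1$, $H(\rho)=\max\{a,q\}$ (and $H(\rho)=\infty$ for irrational $\rho$). Bracket: $[\alpha,\beta]=H(\alpha/\beta)/\max\{\alpha,\beta\}$. $P^-(n)$ denotes the smallest prime factor of $n\in\mathbb{N}$, with $P^-(1)=\infty$. For $\alpha\ge1$, $\mathcal{N}_\alpha=\bigcup_{n\in\mathbb{N},\ P^-(n)>\alpha}(n\alpha-\tfrac12,n\alpha+\tfrac12)$. $\mathbb{P}_T(\mathcal{S})=\mathrm{meas}(\mathcal{S}\cap[0,T])/T$ with Lebesgue measure. $f\lesssim g$ means $f\le(1+o(1))g$ as $T\to\infty$. *)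

theory Defs
  imports "HOL-Analysis.Analysis" "HOL-Computational_Algebra.Primes"
begin

definition height :: "real \<Rightarrow> ereal" where
  "height \<rho> = (if \<rho> \<in> \<rat> then
      (let (a, q) = quotient_of (THE r::rat. of_rat r = \<rho>) in ereal (real_of_int (max a q)))
    else \<infinity>)"

definition bracket :: "real \<Rightarrow> real \<Rightarrow> ereal" where
  "bracket \<alpha> \<beta> = height (\<alpha> / \<beta>) / ereal (max \<alpha> \<beta>)"

definition lpf :: "nat \<Rightarrow> ereal" where
  "lpf n = (if n = 1 then \<infinity> else ereal (real (Min (prime_factors n))))"

definition Nset :: "real \<Rightarrow> real set" where
  "Nset \<alpha> = (\<Union>n\<in>{n::nat. n \<ge> 1 \<and> lpf n > ereal \<alpha>}.
                 {real n * \<alpha> - 1/2 <..< real n * \<alpha> + 1/2})"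

definition PT :: "real \<Rightarrow> real set \<Rightarrow> real" where
  "PT T S = measure lebesgue (S \<inter> {0..T}) / T"

end

theory Submission
  imports Defs
begin

section \<open>Counting residues\<close>

lemma inj_on_mod_pair:
  fixes m n :: nat
  assumes "coprime m n"
  shows "inj_on (\<lambda>t. (t mod m, t mod n)) {..<m * n}"
proof (rule inj_onI)
  fix x y assume x: "x \<in> {..<m * n}" and y: "y \<in> {..<m * n}"
    and eq: "(x mod m, x mod n) = (y mod m, y mod n)"
  have "int x < int (m * n)" "int y < int (m * n)"
    using x y by (simp_all only: lessThan_iff of_nat_less_iff)
  then have "\<bar>int x - int y\<bar> < int (m * n)"
    by linarith
  moreover have "int m dvd int x - int y" "int n dvd int x - int y"
    using eq by (auto simp: mod_eq_dvd_iff [symmetric] simp flip: of_nat_mod)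
  then have "int (m * n) dvd int x - int y"
    using assms by (simp add: divides_mult)
  ultimately have "int x - int y = 0"
    by (metis dvd_imp_le_int abs_of_nat leD)
  then show "x = y"
    by simp
qed

lemma bij_betw_mod_pair:
  fixes m n :: nat
  assumes "coprime m n" "m > 0" "n > 0"
  shows "bij_betw (\<lambda>t. (t mod m, t mod n)) {..<m * n} ({..<m} \<times> {..<n})"
proof -
  let ?f = "\<lambda>t. (t mod m, t mod n)"
  have "card (?f ` {..<m * n}) = card ({..<m} \<times> {..<n})"
    using card_image [OF inj_on_mod_pair [OF assms(1)]] by (simp add: card_cartesian_product)
  moreover have "?f ` {..<m * n} \<subseteq> {..<m} \<times> {..<n}"
    using assms(2,3) by auto
  ultimately have "?f ` {..<m * n} = {..<m} \<times> {..<n}"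
    by (intro card_subset_eq) auto
  then show ?thesis
    using inj_on_mod_pair [OF assms(1)] by (simp add: bij_betw_def)
qed

lemma card_bij_betw_preimage:
  assumes "bij_betw f X Y" "Z \<subseteq> Y"
  shows "card {x \<in> X. f x \<in> Z} = card Z"
proof -
  have img: "f ` {x \<in> X. f x \<in> Z} = Z"
  proof
    show "Z \<subseteq> f ` {x \<in> X. f x \<in> Z}"
    proof
      fix z assume "z \<in> Z"
      then obtain x where "x \<in> X" "z = f x"
        using assms bij_betw_imp_surj_on by blast
      then show "z \<in> f ` {x \<in> X. f x \<in> Z}"
        using \<open>z \<in> Z\<close> by blast
    qed
  qed blast
  have "bij_betw f {x \<in> X. f x \<in> Z} Z"
    by (rule bij_betw_subset [OF assms(1) _ img]) auto
  then show ?thesis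
    by (rule bij_betw_same_card)
qed

lemma coprime_prime_prod_primes:
  fixes p :: nat
  assumes "finite F" "\<forall>q\<in>F. prime q" "prime p" "p \<notin> F"
  shows "coprime p (\<Prod>F)"
proof (rule prime_imp_coprime [OF assms(3)])
  show "\<not> p dvd \<Prod>F"
  proof
    assume "p dvd \<Prod>F"
    then obtain q where "q \<in> F" "p dvd q"
      using prime_dvd_prod_iff [OF assms(1,3)] by auto
    then have "p = q"
      using assms by (simp add: primes_dvd_imp_eq)
    then show False
      using \<open>q \<in> F\<close> assms(4) by auto
  qed
qed

lemma card_residues_prod_primes:
  fixes S :: "nat set" and C :: "nat \<Rightarrow> nat \<Rightarrow> bool"
  assumes "finite S" "\<forall>p\<in>S. prime p"
  shows "card {t. t < \<Prod>S \<and> (\<forall>p\<in>S. C p (t mod p))} = (\<Prod>p\<in>S. card {r. r < p \<and> C p r})"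
  using assms
proof (induction S rule: finite_induct)
  case empty
  then show ?case by simp
next
  case (insert p F)
  define P where "P = \<Prod>F"
  have "prime p" and primes: "\<forall>q\<in>F. prime q"
    using insert.prems by auto
  have "P > 0" "p > 0"
    using primes \<open>prime p\<close> by (auto simp: P_def prime_gt_0_nat intro!: prod_pos)
  have bij: "bij_betw (\<lambda>t. (t mod p, t mod P)) {..<p * P} ({..<p} \<times> {..<P})"
    using coprime_prime_prod_primes [OF insert(1) primes \<open>prime p\<close> insert(2)]
      \<open>P > 0\<close> \<open>p > 0\<close> by (intro bij_betw_mod_pair) (simp_all add: P_def)
  have mod_P: "t mod P mod q = t mod q" if "q \<in> F" for t q
  proof -
    have "q dvd P"
      unfolding P_def using dvd_prodI [OF insert(1) that, of id] by simp
    then show ?thesis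
      by (simp add: mod_mod_cancel)
  qed
  have prod_insert: "\<Prod>(insert p F) = p * P"
    using insert(1,2) by (simp add: P_def)
  define A where "A = {r. r < p \<and> C p r}"
  define B where "B = {s. s < P \<and> (\<forall>q\<in>F. C q (s mod q))}"
  have "{t. t < \<Prod>(insert p F) \<and> (\<forall>q\<in>insert p F. C q (t mod q))}
      = {t \<in> {..<p * P}. (t mod p, t mod P) \<in> A \<times> B}"
    unfolding prod_insert A_def B_def using \<open>p > 0\<close> \<open>P > 0\<close> by (auto simp: mod_P)
  moreover have "card {t \<in> {..<p * P}. (t mod p, t mod P) \<in> A \<times> B} = card A * card B"
    using card_bij_betw_preimage [OF bij, of "A \<times> B"] by (auto simp: A_def B_def card_cartesian_product)
  ultimately show ?case
    using insert.IH primes insert(1,2) by (simp add: A_def B_def P_def)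
qed

lemma card_coprime_residues_prod_primes:
  fixes S :: "nat set"
  assumes "finite S" "\<forall>p\<in>S. prime p"
  shows "card {n. n < \<Prod>S \<and> (\<forall>p\<in>S. \<not> p dvd n)} = (\<Prod>p\<in>S. p - 1)"
proof -
  have "{r. r < p \<and> r \<noteq> 0} = {1..<p}" for p :: nat
    by auto
  then show ?thesis
    using card_residues_prod_primes [OF assms, of "\<lambda>p r. r \<noteq> 0"] by (simp add: dvd_eq_mod_eq_0)
qed

lemma periodic_add_mult:
  fixes g :: "nat \<Rightarrow> bool"
  assumes per: "\<And>n. g (n + L) = g n"
  shows "g (n + k * L) = g n"
proof (induction k)
  case (Suc k)
  have "g (n + Suc k * L) = g ((n + k * L) + L)"
    by (simp add: algebra_simps)
  then show ?case
    using per [of "n + k * L"] Suc.IH by simp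
qed simp

lemma card_periodic_lessThan_mult:
  fixes g :: "nat \<Rightarrow> bool"
  assumes per: "\<And>n. g (n + L) = g n"
  shows "card {n. n < k * L \<and> g n} = k * card {n. n < L \<and> g n}"
proof (induction k)
  case (Suc k)
  let ?shift = "\<lambda>n. n + k * L"
  have per_k: "g (n + k * L) = g n" for n
    by (rule periodic_add_mult [where g = g and L = L, OF per])
  have "{n. n < Suc k * L \<and> g n} = {n. n < k * L \<and> g n} \<union> ?shift ` {n. n < L \<and> g n}"
  proof (intro set_eqI iffI)
    fix x assume x: "x \<in> {n. n < Suc k * L \<and> g n}"
    show "x \<in> {n. n < k * L \<and> g n} \<union> ?shift ` {n. n < L \<and> g n}"
    proof (cases "x < k * L")
      case False
      then obtain y where "x = y + k * L"
        by (metis add.commute le_iff_add not_less)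
      then show ?thesis
        using x per_k [of y] by auto
    qed (use x in auto)
  qed (auto simp: per_k)
  moreover have "{n. n < k * L \<and> g n} \<inter> ?shift ` {n. n < L \<and> g n} = {}"
    by auto
  moreover have "card (?shift ` {n. n < L \<and> g n}) = card {n. n < L \<and> g n}"
    by (rule card_image) (auto simp: inj_on_def)
  ultimately show ?case
    using Suc.IH by (simp add: card_Un_disjoint)
qed simp

lemma card_periodic_atMost_le:
  fixes g :: "nat \<Rightarrow> bool"
  assumes per: "\<And>n. g (n + L) = g n" and L: "L > 0"
  shows "card {n. 1 \<le> n \<and> n \<le> N \<and> g n} \<le> (N div L + 1) * card {n. n < L \<and> g n}"
proof -
  have "N < (N div L + 1) * L"
    using L by (metis add.commute div_mult_mod_eq less_add_same_cancel2 mod_less_divisor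
        add_less_cancel_left distrib_right mult_1)
  then have "card {n. 1 \<le> n \<and> n \<le> N \<and> g n} \<le> card {n. n < (N div L + 1) * L \<and> g n}"
    by (intro card_mono) auto
  also have "\<dots> = (N div L + 1) * card {n. n < L \<and> g n}"
    by (rule card_periodic_lessThan_mult [where g = g and L = L, OF per])
  finally show ?thesis .
qed

lemma card_periodic_atMost_ge:
  fixes g :: "nat \<Rightarrow> bool"
  assumes per: "\<And>n. g (n + L) = g n" and "\<not> g 0"
  shows "(N div L) * card {n. n < L \<and> g n} \<le> card {n. 1 \<le> n \<and> n \<le> N \<and> g n}"
proof -
  have "(N div L) * L \<le> N"
    by (metis div_mult_mod_eq le_add1)
  have "{n. n < (N div L) * L \<and> g n} \<subseteq> {n. 1 \<le> n \<and> n \<le> N \<and> g n}"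
  proof
    fix x assume "x \<in> {n. n < (N div L) * L \<and> g n}"
    then have "g x" "x < (N div L) * L"
      by simp_all
    from \<open>g x\<close> \<open>\<not> g 0\<close> have "x \<noteq> 0"
      by (intro notI) simp
    moreover have "x \<le> N"
      using \<open>x < _\<close> \<open>(N div L) * L \<le> N\<close> by linarith
    ultimately show "x \<in> {n. 1 \<le> n \<and> n \<le> N \<and> g n}"
      using \<open>g x\<close> by simp
  qed
  then have "card {n. n < (N div L) * L \<and> g n} \<le> card {n. 1 \<le> n \<and> n \<le> N \<and> g n}"
    by (intro card_mono) auto
  then show ?thesis
    using card_periodic_lessThan_mult [where g = g and L = L, OF per] by simp
qed

section \<open>A sieve bound for tent-weighted sums\<close>

definition tent :: "real \<Rightarrow> int \<Rightarrow> real" where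
  "tent Y j = max 0 (1 - \<bar>real_of_int j\<bar> / Y)"

lemma tent_nonneg: "tent Y j \<ge> 0"
  by (simp add: tent_def)

lemma sum_abs_int_symmetric: "(\<Sum>j\<in>{-int k..int k}. \<bar>real_of_int j\<bar>) = real k * (real k + 1)"
proof (induction k)
  case (Suc k)
  have "{-int (Suc k)..int (Suc k)} = insert (-int (Suc k)) (insert (int (Suc k)) {-int k..int k})"
    by auto
  then show ?case
    using Suc.IH by (simp add: algebra_simps)
qed simp

lemma sum_tent_eq:
  fixes Y :: real and Z :: "int set" and k :: nat
  assumes "real k < Y" "Y \<le> real k + 1" and "finite Z" "{j. \<bar>real_of_int j\<bar> < Y} \<subseteq> Z"
  shows "(\<Sum>j\<in>Z. tent Y j) = 2 * real k + 1 - real k * (real k + 1) / Y"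
proof -
  have Y: "Y > 0"
    using assms(1) by linarith
  define W where "W = {-int k..int k}"
  have "W \<subseteq> Z"
    using assms(1,4) by (force simp: W_def)
  have "(\<Sum>j\<in>Z. tent Y j) = (\<Sum>j\<in>W. tent Y j)"
  proof (rule sum.mono_neutral_right [OF assms(3) \<open>W \<subseteq> Z\<close>], intro ballI)
    fix j assume "j \<in> Z - W"
    then have "\<bar>real_of_int j\<bar> \<ge> Y"
      using assms(2) by (auto simp: W_def)
    then show "tent Y j = 0"
      using Y by (simp add: tent_def)
  qed
  also have "\<dots> = (\<Sum>j\<in>W. 1 - \<bar>real_of_int j\<bar> / Y)"
  proof (rule sum.cong [OF refl])
    fix j assume "j \<in> W"
    then have "\<bar>real_of_int j\<bar> / Y \<le> 1"
      using assms(1) Y by (auto simp: W_def divide_simps)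
    then show "tent Y j = 1 - \<bar>real_of_int j\<bar> / Y"
      by (simp add: tent_def)
  qed
  also have "\<dots> = 2 * real k + 1 - real k * (real k + 1) / Y"
    unfolding W_def sum_subtractf sum_divide_distrib [symmetric] sum_abs_int_symmetric by simp
  finally show ?thesis .
qed

lemma sum_tent_bounds:
  fixes Y :: real and Z :: "int set"
  assumes "Y > 0" "finite Z" "{j. \<bar>real_of_int j\<bar> < Y} \<subseteq> Z"
  shows "Y \<le> (\<Sum>j\<in>Z. tent Y j) \<and> (\<Sum>j\<in>Z. tent Y j) \<le> Y + 1"
proof -
  define k where "k = nat (\<lceil>Y\<rceil> - 1)"
  have k: "real k < Y" "Y \<le> real k + 1"
    using assms(1) ceiling_correct [of Y] by (auto simp: k_def)
  have "0 \<le> (Y - real k) ^ 2 + real k"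
    by simp
  moreover have "(Y - real k) * (Y - real k - 1) \<le> 0"
    using k by (intro mult_nonneg_nonpos) auto
  ultimately show ?thesis
    using assms(1) unfolding sum_tent_eq [OF k assms(2,3)]
    by (simp add: field_simps power2_eq_square)
qed

lemma sum_tent_multiples_bounds:
  fixes H :: real and Z :: "int set" and d :: nat
  assumes H: "H > 0" and Z: "finite Z" "{j. \<bar>real_of_int j\<bar> < H} \<subseteq> Z" and d: "d > 0"
  shows "H / d \<le> (\<Sum>h\<in>{h\<in>Z. int d dvd h}. tent H h)
       \<and> (\<Sum>h\<in>{h\<in>Z. int d dvd h}. tent H h) \<le> H / d + 1"
proof -
  define Zd where "Zd = {j. int d * j \<in> Z}"
  have inj: "inj_on (\<lambda>j::int. int d * j) A" for A
    using d by (auto simp: inj_on_def)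
  have "finite Zd"
    unfolding Zd_def using finite_vimageI [OF Z(1) inj] by (simp add: vimage_def)
  have img: "(\<lambda>j. int d * j) ` Zd = {h \<in> Z. int d dvd h}"
    unfolding Zd_def by (auto elim!: dvdE)
  have "(\<Sum>h\<in>{h\<in>Z. int d dvd h}. tent H h) = (\<Sum>j\<in>Zd. tent H (int d * j))"
    unfolding img [symmetric] by (simp add: sum.reindex [OF inj] comp_def)
  also have "\<dots> = (\<Sum>j\<in>Zd. tent (H / d) j)"
    using d H by (intro sum.cong refl) (simp add: tent_def abs_mult field_simps)
  finally have eq: "(\<Sum>h\<in>{h\<in>Z. int d dvd h}. tent H h) = (\<Sum>j\<in>Zd. tent (H / d) j)" .
  have "{j. \<bar>real_of_int j\<bar> < H / d} \<subseteq> Zd"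
    using Z(2) d by (auto simp: Zd_def abs_mult field_simps)
  then show ?thesis
    unfolding eq using sum_tent_bounds [OF _ \<open>finite Zd\<close>] H d by simp
qed

lemma prod_primes_dvd_iff:
  fixes S :: "nat set" and h :: int
  assumes "finite S" "\<forall>p\<in>S. prime p"
  shows "(\<Prod>p\<in>S. int p) dvd h \<longleftrightarrow> (\<forall>p\<in>S. int p dvd h)"
  using assms
proof (induction S rule: finite_induct)
  case (insert p F)
  then have "coprime (int p) (int (\<Prod>F))"
    using coprime_prime_prod_primes [of F p] by (simp del: of_nat_prod)
  then have "coprime (int p) (\<Prod>q\<in>F. int q)"
    by simp
  then have "int p * (\<Prod>q\<in>F. int q) dvd h \<longleftrightarrow> int p dvd h \<and> (\<Prod>q\<in>F. int q) dvd h"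
    by (meson divides_mult dvd_mult_left dvd_mult_right dvd_trans)
  then show ?case
    using insert by simp
qed simp

lemma prod_of_bool:
  "finite A \<Longrightarrow> (\<Prod>x\<in>A. of_bool (P x) :: 'a::comm_semiring_1) = of_bool (\<forall>x\<in>A. P x)"
  by (induction A rule: finite_induct) auto

lemma prod_indicator_dvd_expand:
  fixes S :: "nat set" and u v :: "nat \<Rightarrow> real" and h :: int
  assumes "finite S" "\<forall>p\<in>S. prime p"
  shows "(\<Prod>p\<in>S. u p + v p * of_bool (int p dvd h))
       = (\<Sum>D\<in>Pow S. (\<Prod>p\<in>D. v p) * (\<Prod>p\<in>S - D. u p) * of_bool ((\<Prod>p\<in>D. int p) dvd h))"
proof -
  have "(\<Prod>p\<in>S. u p + v p * of_bool (int p dvd h))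
      = (\<Sum>D\<in>Pow S. (\<Prod>p\<in>D. v p * of_bool (int p dvd h)) * (\<Prod>p\<in>S - D. u p))"
    using prod_add [OF assms(1), of "\<lambda>p. v p * of_bool (int p dvd h)" u] by (simp add: add.commute)
  also have "\<dots> = (\<Sum>D\<in>Pow S. (\<Prod>p\<in>D. v p) * (\<Prod>p\<in>S - D. u p) * of_bool ((\<Prod>p\<in>D. int p) dvd h))"
  proof (rule sum.cong [OF refl])
    fix D assume "D \<in> Pow S"
    then have "finite D" "\<forall>p\<in>D. prime p"
      using assms finite_subset by auto
    then have "(\<Prod>p\<in>D. of_bool (int p dvd h) :: real) = of_bool ((\<Prod>p\<in>D. int p) dvd h)"
      by (simp add: prod_primes_dvd_iff prod_of_bool)
    then show "(\<Prod>p\<in>D. v p * of_bool (int p dvd h)) * (\<Prod>p\<in>S - D. u p)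
        = (\<Prod>p\<in>D. v p) * (\<Prod>p\<in>S - D. u p) * of_bool ((\<Prod>p\<in>D. int p) dvd h)"
      by (simp add: prod.distrib)
  qed
  finally show ?thesis .
qed

text \<open>Expanding the product over \<open>D \<subseteq> S\<close>, the term of \<open>D\<close> is weighted by the tent-weighted
  count of multiples of \<open>\<Prod>D\<close>, which is \<open>H / \<Prod>D\<close> up to an error of at most \<open>1\<close>.\<close>

lemma tent_sieve_bound:
  fixes S :: "nat set" and u v :: "nat \<Rightarrow> real" and H :: real and Z :: "int set"
  assumes fin: "finite S" and pr: "\<forall>p\<in>S. prime p"
    and H: "H > 0" and Z: "finite Z" "{j. \<bar>real_of_int j\<bar> < H} \<subseteq> Z"
  shows "(\<Sum>h\<in>Z. tent H h * (\<Prod>p\<in>S. u p + v p * of_bool (int p dvd h)))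
     \<le> H * (\<Prod>p\<in>S. u p + v p / p) + (\<Prod>p\<in>S. \<bar>u p\<bar> + \<bar>v p\<bar>)"
proof -
  define c where "c D = (\<Prod>p\<in>D. v p) * (\<Prod>p\<in>S - D. u p)" for D
  define \<Sigma> where "\<Sigma> D = (\<Sum>h\<in>{h\<in>Z. (\<Prod>p\<in>D. int p) dvd h}. tent H h)" for D
  have "(\<Sum>h\<in>Z. tent H h * (\<Prod>p\<in>S. u p + v p * of_bool (int p dvd h)))
      = (\<Sum>h\<in>Z. \<Sum>D\<in>Pow S. c D * (tent H h * of_bool ((\<Prod>p\<in>D. int p) dvd h)))"
    by (simp add: prod_indicator_dvd_expand [OF fin pr] c_def sum_distrib_left mult_ac)
  also have "\<dots> = (\<Sum>D\<in>Pow S. c D * \<Sigma> D)"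
    by (subst sum.swap) (simp add: \<Sigma>_def sum_distrib_left sum.inter_filter [OF Z(1)] of_bool_def if_distrib cong: if_cong)
  also have "\<dots> \<le> (\<Sum>D\<in>Pow S. c D * (H / (\<Prod>p\<in>D. real p)) + \<bar>c D\<bar>)"
  proof (rule sum_mono)
    fix D assume "D \<in> Pow S"
    then have "\<Prod>D > 0"
      using pr by (intro prod_pos) (auto simp: prime_gt_0_nat)
    then have "H / (\<Prod>p\<in>D. real p) \<le> \<Sigma> D" "\<Sigma> D \<le> H / (\<Prod>p\<in>D. real p) + 1"
      using sum_tent_multiples_bounds [OF H Z, of "\<Prod>D"] by (simp_all add: \<Sigma>_def)
    then show "c D * \<Sigma> D \<le> c D * (H / (\<Prod>p\<in>D. real p)) + \<bar>c D\<bar>"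
    proof (cases "c D \<ge> 0")
      case True
      then have "c D * \<Sigma> D \<le> c D * (H / (\<Prod>p\<in>D. real p) + 1)"
        using \<open>\<Sigma> D \<le> _\<close> by (rule mult_left_mono [rotated])
      then show ?thesis
        using True by (simp add: algebra_simps)
    next
      case False
      then have "c D * \<Sigma> D \<le> c D * (H / (\<Prod>p\<in>D. real p))"
        using \<open>_ \<le> \<Sigma> D\<close> by (intro mult_left_mono_neg) auto
      then show ?thesis
        by simp
    qed
  qed
  also have "\<dots> = H * (\<Sum>D\<in>Pow S. (\<Prod>p\<in>D. v p / p) * (\<Prod>p\<in>S - D. u p))
      + (\<Sum>D\<in>Pow S. (\<Prod>p\<in>D. \<bar>v p\<bar>) * (\<Prod>p\<in>S - D. \<bar>u p\<bar>))"
    by (simp add: c_def sum.distrib sum_distrib_left prod_dividef abs_mult abs_prod mult_ac)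
  also have "\<dots> = H * (\<Prod>p\<in>S. v p / p + u p) + (\<Prod>p\<in>S. \<bar>v p\<bar> + \<bar>u p\<bar>)"
    by (simp only: prod_add [OF fin])
  also have "\<dots> = H * (\<Prod>p\<in>S. u p + v p / p) + (\<Prod>p\<in>S. \<bar>u p\<bar> + \<bar>v p\<bar>)"
    by (simp add: add.commute)
  finally show ?thesis .
qed

lemma exists_residue_linear_congruence:
  fixes m :: nat and b c :: int
  assumes "coprime b (int m)" "m > 0"
  shows "\<exists>r<m. int m dvd c + b * int r"
proof -
  obtain x y where xy: "x * b + y * int m = 1"
    using bezout_int [of b "int m"] assms(1) by (auto simp: coprime_iff_gcd_eq_1)
  define r where "r = (- c * x) mod int m"
  have r: "0 \<le> r" "r < int m"
    using assms(2) by (simp_all add: r_def)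
  have "int m dvd - c * x - r"
    by (simp add: r_def mod_eq_dvd_iff [symmetric])
  then have "int m dvd c * (y * int m) - b * (- c * x - r)"
    by simp
  moreover have "c * (y * int m) - b * (- c * x - r) = c * (x * b + y * int m) + b * r"
    by (simp add: algebra_simps)
  then have "c * (y * int m) - b * (- c * x - r) = c + b * r"
    by (simp only: xy mult_1_right)
  ultimately show ?thesis
    using r by (intro exI [of _ "nat r"]) simp
qed

lemma card_lessThan_filter_le_diff:
  assumes "R \<subseteq> {..<p}" "\<forall>r\<in>R. \<not> G r"
  shows "card {r. r < p \<and> G r} \<le> p - card R"
proof -
  have "card {r. r < p \<and> G r} \<le> card ({..<p} - R)"
    using assms by (intro card_mono) auto
  also have "\<dots> = p - card R"
    using assms(1) finite_subset [OF assms(1)] by (simp add: card_Diff_subset)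
  finally show ?thesis .
qed

section \<open>Local densities of admissible residues\<close>

lemma exists_root_mod_prime:
  fixes p b :: nat and c :: int
  assumes "prime p" "\<not> p dvd b"
  shows "\<exists>r<p. int p dvd c + int b * int r"
proof -
  have "coprime (int b) (int p)"
    using assms prime_imp_coprime [of p b] by (simp add: coprime_commute)
  then show ?thesis
    using assms(1) prime_gt_0_nat exists_residue_linear_congruence by blast
qed

text \<open>A residue \<open>r\<close> modulo \<open>p\<close> is admissible if \<open>n = n\<^sub>h + q r\<close> avoids \<open>p\<close>, and, when
  \<open>small\<close> (i.e. \<open>p \<le> \<beta>\<close>), so does the cofactor \<open>m = m\<^sub>h + a r\<close>.\<close>

definition local_admissible :: "bool \<Rightarrow> nat \<Rightarrow> nat \<Rightarrow> nat \<Rightarrow> int \<Rightarrow> int \<Rightarrow> nat \<Rightarrow> bool" where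
  "local_admissible small p a q nh mh r \<longleftrightarrow>
     \<not> int p dvd nh + int q * int r \<and> (small \<longrightarrow> \<not> int p dvd mh + int a * int r)"

text \<open>The proportion of admissible residues modulo \<open>p\<close> is at most
  \<open>local_const + local_dvd * [p dvd h]\<close>, where \<open>h = a n\<^sub>h - q m\<^sub>h\<close>.\<close>

definition local_const :: "bool \<Rightarrow> nat \<Rightarrow> nat \<Rightarrow> nat \<Rightarrow> real" where
  "local_const small p a q =
     (if small then (if p dvd a \<or> p dvd q then (real p - 1) / p else (real p - 2) / p)
      else (if p dvd q then 1 else (real p - 1) / p))"

definition local_dvd :: "bool \<Rightarrow> nat \<Rightarrow> nat \<Rightarrow> nat \<Rightarrow> real" where
  "local_dvd small p a q =
     (if small then (if p dvd a \<or> p dvd q then - (real p - 1) / p else 1 / p)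
      else (if p dvd q then -1 else 0))"

lemma prime_not_dvd_coprime_pair:
  assumes "prime (p::nat)" "coprime a q"
  shows "\<not> p dvd a \<or> \<not> p dvd q"
proof (rule ccontr)
  assume "\<not> (\<not> p dvd a \<or> \<not> p dvd q)"
  then have "p = 1"
    using assms(2) coprime_common_divisor_nat by auto
  then show False
    using assms(1) by simp
qed

lemma local_admissible_none:
  fixes p a q :: nat and nh mh h :: int
  assumes "prime p" "coprime a q" "int a * nh - int q * mh = h" "int p dvd h"
    and "p dvd q \<or> small \<and> p dvd a"
  shows "\<not> local_admissible small p a q nh mh r"
proof -
  from prime_not_dvd_coprime_pair [OF assms(1,2)] consider "p dvd q" "\<not> int p dvd int a" | "small" "p dvd a" "\<not> int p dvd int q"
    using assms(5) by auto
  then show ?thesis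
  proof cases
    case 1
    have "int a * nh = h + int q * mh"
      using assms(3) by simp
    moreover have "int p dvd h + int q * mh"
      using 1 assms(4) by simp
    ultimately have "int p dvd int a * nh"
      by simp
    then have "int p dvd nh"
      using 1 assms(1) by (simp add: prime_dvd_mult_iff)
    then show ?thesis
      using 1 by (simp add: local_admissible_def)
  next
    case 2
    have "int q * mh = int a * nh - h"
      using assms(3) by simp
    moreover have "int p dvd int a * nh - h"
      using 2 assms(4) by simp
    ultimately have "int p dvd int q * mh"
      by simp
    then have "int p dvd mh"
      using 2 assms(1) by (simp add: prime_dvd_mult_iff)
    then show ?thesis
      using 2 by (simp add: local_admissible_def)
  qed
qed

lemma roots_eq_imp_dvd:
  fixes p a q :: nat and nh mh h :: int
  assumes "int a * nh - int q * mh = h"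
    and "int p dvd nh + int q * int r" "int p dvd mh + int a * int r"
  shows "int p dvd h"
proof -
  have "int p dvd int a * (nh + int q * int r) - int q * (mh + int a * int r)"
    using assms(2,3) by simp
  also have "int a * (nh + int q * int r) - int q * (mh + int a * int r) = h"
    using assms(1) by (simp add: algebra_simps)
  finally show ?thesis .
qed

lemma card_local_admissible_exclude:
  assumes "R \<subseteq> {..<p}" "\<forall>r\<in>R. \<not> local_admissible small p a q nh mh r"
  shows "real (card {r. r < p \<and> local_admissible small p a q nh mh r}) \<le> real p - real (card R)"
proof -
  have "card R \<le> p"
    using card_mono [OF _ assms(1)] by simp
  then show ?thesis
    using card_lessThan_filter_le_diff [OF assms] by linarith
qed

lemma card_local_admissible_small_le:
  fixes p a q :: nat and nh mh h :: int
  assumes p: "prime p" and cop: "coprime a q" and h: "int a * nh - int q * mh = h"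
  shows "real (card {r. r < p \<and> local_admissible True p a q nh mh r})
    \<le> real p * (local_const True p a q + local_dvd True p a q * of_bool (int p dvd h))"
    (is "_ \<le> ?rhs")
proof -
  let ?A = "{r. r < p \<and> local_admissible True p a q nh mh r}"
  have "real p > 0"
    using p prime_gt_0_nat by simp
  consider "p dvd a \<or> p dvd q" "int p dvd h" | "p dvd a \<or> p dvd q" "\<not> int p dvd h"
    | "\<not> p dvd a" "\<not> p dvd q" "int p dvd h" | "\<not> p dvd a" "\<not> p dvd q" "\<not> int p dvd h"
    by blast
  then show ?thesis
  proof cases
    case 1
    then have "?A = {}"
      using local_admissible_none [OF p cop h] by auto
    then have "card ?A = 0"
      by (simp only: card.empty)
    then show ?thesis
      using 1 \<open>real p > 0\<close> by (simp add: local_const_def local_dvd_def field_simps)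
  next
    case 2
    obtain r where "r < p" "\<not> local_admissible True p a q nh mh r"
      using prime_not_dvd_coprime_pair [OF p cop] exists_root_mod_prime [OF p]
      by (metis local_admissible_def)
    then have "real (card ?A) \<le> real p - 1"
      using card_local_admissible_exclude [of "{r}" p True a q nh mh] by simp
    moreover have "?rhs = real p - 1"
      using 2 \<open>real p > 0\<close> by (simp add: local_const_def local_dvd_def field_simps)
    ultimately show ?thesis
      by linarith
  next
    case 3
    obtain r where "r < p" "int p dvd nh + int q * int r"
      using 3 exists_root_mod_prime [OF p] by blast
    then have "real (card ?A) \<le> real p - 1"
      using card_local_admissible_exclude [of "{r}" p True a q nh mh] by (simp add: local_admissible_def)
    moreover have "?rhs = real p - 1"
      using 3 \<open>real p > 0\<close> by (simp add: local_const_def local_dvd_def field_simps)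
    ultimately show ?thesis
      by linarith
  next
    case 4
    obtain r1 where r1: "r1 < p" "int p dvd nh + int q * int r1"
      using 4 exists_root_mod_prime [OF p] by blast
    obtain r2 where r2: "r2 < p" "int p dvd mh + int a * int r2"
      using 4 exists_root_mod_prime [OF p] by blast
    have "r1 \<noteq> r2"
      using 4 r1 r2 roots_eq_imp_dvd [OF h] by blast
    then have "real (card ?A) \<le> real p - 2"
      using card_local_admissible_exclude [of "{r1, r2}" p True a q nh mh] r1 r2 by (simp add: local_admissible_def)
    moreover have "?rhs = real p - 2"
      using 4 \<open>real p > 0\<close> by (simp add: local_const_def local_dvd_def field_simps)
    ultimately show ?thesis
      by linarith
  qed
qed

lemma card_local_admissible_large_le:
  fixes p a q :: nat and nh mh h :: int
  assumes p: "prime p" and cop: "coprime a q" and h: "int a * nh - int q * mh = h"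
  shows "real (card {r. r < p \<and> local_admissible False p a q nh mh r})
    \<le> real p * (local_const False p a q + local_dvd False p a q * of_bool (int p dvd h))"
    (is "_ \<le> ?rhs")
proof -
  let ?A = "{r. r < p \<and> local_admissible False p a q nh mh r}"
  have "real p > 0"
    using p prime_gt_0_nat by simp
  consider "p dvd q" "int p dvd h" | "p dvd q" "\<not> int p dvd h" | "\<not> p dvd q"
    by blast
  then show ?thesis
  proof cases
    case 1
    then have "?A = {}"
      using local_admissible_none [OF p cop h] by auto
    then have "card ?A = 0"
      by (simp only: card.empty)
    then show ?thesis
      using 1 \<open>real p > 0\<close> by (simp add: local_const_def local_dvd_def field_simps)
  next
    case 2
    have "real (card ?A) \<le> real p"
      using card_local_admissible_exclude [of "{}" p False a q nh mh] by simp
    then show ?thesis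
      using 2 by (simp add: local_const_def local_dvd_def)
  next
    case 3
    obtain r where "r < p" "int p dvd nh + int q * int r"
      using 3 exists_root_mod_prime [OF p] by blast
    then have "real (card ?A) \<le> real p - 1"
      using card_local_admissible_exclude [of "{r}" p False a q nh mh] by (simp add: local_admissible_def)
    moreover have "?rhs = real p - 1"
      using 3 \<open>real p > 0\<close> by (simp add: local_const_def local_dvd_def field_simps)
    ultimately show ?thesis
      by linarith
  qed
qed

lemma card_local_admissible_le:
  fixes p a q :: nat and nh mh h :: int
  assumes "prime p" "coprime a q" "int a * nh - int q * mh = h"
  shows "real (card {r. r < p \<and> local_admissible small p a q nh mh r})
    \<le> real p * (local_const small p a q + local_dvd small p a q * of_bool (int p dvd h))"
  using card_local_admissible_small_le [OF assms] card_local_admissible_large_le [OF assms]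
  by (cases small) simp_all

lemma local_mean:
  assumes "p \<ge> 2"
  shows "local_const small p a q + local_dvd small p a q / p
    = ((real p - 1) / p) * (if small then (real p - 1) / p else 1)"
  using assms by (auto simp: local_const_def local_dvd_def field_simps power2_eq_square)

lemma local_abs_le:
  assumes "p \<ge> 2" and "\<not> small \<Longrightarrow> p \<ge> 3"
  shows "\<bar>local_const small p a q\<bar> + \<bar>local_dvd small p a q\<bar>
    \<le> (local_const small p a q + local_dvd small p a q / p)
      * ((if small then real p / (real p - 1) else 1) * (if p dvd q \<or> small \<and> p dvd a then 3 else 1))"
proof -
  have p: "real p \<ge> 2"
    using assms(1) by simp
  consider "small" "p dvd a \<or> p dvd q" | "small" "\<not> p dvd a" "\<not> p dvd q"
    | "\<not> small" "p dvd q" | "\<not> small" "\<not> p dvd q"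
    by blast
  then show ?thesis
  proof cases
    case 1
    have "\<bar>local_const small p a q\<bar> + \<bar>local_dvd small p a q\<bar> = 2 * (real p - 1) / p"
      using 1 p by (simp add: local_const_def local_dvd_def abs_div_pos)
    moreover have "((real p - 1) / p) * ((real p - 1) / p) * (real p / (real p - 1) * 3)
        = 3 * (real p - 1) / p"
      using p by (simp add: field_simps power2_eq_square)
    ultimately show ?thesis
      using 1 p by (auto simp: local_mean [OF assms(1)] divide_right_mono)
  next
    case 2
    have "\<bar>local_const small p a q\<bar> + \<bar>local_dvd small p a q\<bar> = (real p - 1) / p"
      using 2 p by (simp add: local_const_def local_dvd_def abs_div_pos add_divide_distrib [symmetric])
    moreover have "((real p - 1) / p) * ((real p - 1) / p) * (real p / (real p - 1)) = (real p - 1) / p"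
      using p by (simp add: field_simps power2_eq_square)
    ultimately show ?thesis
      using 2 by (simp add: local_mean [OF assms(1)])
  next
    case 3
    have "\<bar>local_const small p a q\<bar> + \<bar>local_dvd small p a q\<bar> = 2"
      using 3 by (simp add: local_const_def local_dvd_def)
    moreover have "2 \<le> ((real p - 1) / p) * 3"
      using 3 assms(2) by (simp add: field_simps)
    ultimately show ?thesis
      using 3 by (simp add: local_mean [OF assms(1)])
  next
    case 4
    then show ?thesis
      using p by (simp add: local_mean [OF assms(1)] local_const_def local_dvd_def abs_div_pos)
  qed
qed

text \<open>For \<open>\<alpha> = a \<beta> / q\<close>, an admissible \<open>n\<close> is paired with \<open>m = (a n - h) / q\<close>, and
  \<open>n \<alpha> - m \<beta> = h \<beta> / q\<close>.\<close>

definition admissible :: "nat set \<Rightarrow> nat set \<Rightarrow> nat \<Rightarrow> nat \<Rightarrow> int \<Rightarrow> nat \<Rightarrow> bool" where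
  "admissible Pr Ps a q h n \<longleftrightarrow> (\<forall>p\<in>Pr. \<not> p dvd n) \<and> int q dvd int n * int a - h
      \<and> (\<forall>p\<in>Ps. \<not> int p dvd (int n * int a - h) div int q)"

lemma admissible_periodic:
  assumes fin: "finite Pr" and sub: "Ps \<subseteq> Pr" and q: "q > 0"
  shows "admissible Pr Ps a q h (n + q * \<Prod>Pr) = admissible Pr Ps a q h n"
proof -
  define P where "P = \<Prod>Pr"
  have dP: "p dvd P" if "p \<in> Pr" for p
    unfolding P_def using dvd_prodI [OF fin that, of id] by simp
  have shift: "int (n + q * P) * int a - h = (int n * int a - h) + int q * (int P * int a)"
    by (simp add: algebra_simps)
  have "int q dvd (int (n + q * P) * int a - h) \<longleftrightarrow> int q dvd (int n * int a - h)"
    unfolding shift by (simp add: dvd_add_left_iff)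
  moreover have div: "(int (n + q * P) * int a - h) div int q = (int n * int a - h) div int q + int P * int a"
    unfolding shift using q by simp
  moreover have "(\<forall>p\<in>Pr. \<not> p dvd (n + q * P)) \<longleftrightarrow> (\<forall>p\<in>Pr. \<not> p dvd n)"
    using dP by (auto simp: dvd_add_left_iff)
  moreover have "(\<forall>p\<in>Ps. \<not> int p dvd ((int (n + q * P) * int a - h) div int q))
      \<longleftrightarrow> (\<forall>p\<in>Ps. \<not> int p dvd ((int n * int a - h) div int q))"
  proof -
    have "int p dvd int P * int a" if "p \<in> Ps" for p
      using dP sub that by auto
    then show ?thesis
      unfolding div by (auto simp: dvd_add_left_iff)
  qed
  ultimately show ?thesis
    unfolding admissible_def P_def [symmetric] by blast
qed

lemma dvd_add_mult_mod_iff: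
  fixes p t :: nat and b c :: int
  shows "int p dvd c + b * int (t mod p) \<longleftrightarrow> int p dvd c + b * int t"
proof -
  have "int t = int (t mod p) + int p * int (t div p)"
    by (metis of_nat_add of_nat_mult mod_mult_div_eq add.commute)
  then have "int p dvd c + b * int t \<longleftrightarrow> int p dvd (c + b * int (t mod p)) + int p * (b * int (t div p))"
    by (simp add: algebra_simps)
  also have "\<dots> \<longleftrightarrow> int p dvd c + b * int (t mod p)"
    by (rule dvd_add_left_iff) simp
  finally show ?thesis
    by (rule sym)
qed

lemma admissible_shift_iff:
  fixes nh t :: nat and mh h :: int
  assumes "q > 0" "Ps \<subseteq> Pr" "int q * mh = int nh * int a - h"
  shows "admissible Pr Ps a q h (nh + q * t)
    \<longleftrightarrow> (\<forall>p\<in>Pr. local_admissible (p \<in> Ps) p a q (int nh) mh (t mod p))"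
proof -
  have eq: "(int nh + int q * int t) * int a - h = int q * (mh + int a * int t)"
    using assms(3) by (simp add: algebra_simps)
  have dvd_n: "p dvd nh + q * t \<longleftrightarrow> int p dvd int nh + int q * int t" for p
    by (metis of_nat_add of_nat_dvd_iff of_nat_mult)
  show ?thesis
    using assms(1,2) by (auto simp: admissible_def local_admissible_def eq dvd_n dvd_add_mult_mod_iff)
qed

lemma admissible_mod_eq:
  assumes "coprime a q" "nh < q" "int q dvd int nh * int a - h" "admissible Pr Ps a q h n"
  shows "n mod q = nh"
proof -
  have "int q dvd int n * int a - h"
    using assms(4) by (simp add: admissible_def)
  then have "int q dvd (int n * int a - h) - (int nh * int a - h)"
    using assms(3) by (rule dvd_diff)
  then have "int q dvd (int n - int nh) * int a"
    by (simp add: algebra_simps)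
  moreover have "coprime (int q) (int a)"
    using assms(1) by (simp add: coprime_commute)
  ultimately have "int q dvd int n - int nh"
    using coprime_dvd_mult_left_iff by blast
  then have "int n mod int q = int nh mod int q"
    by (simp add: mod_eq_dvd_iff)
  then show ?thesis
    using assms(2) by (metis of_nat_eq_iff of_nat_mod mod_less)
qed

lemma card_admissible_period:
  fixes nh :: nat and mh h :: int
  assumes q: "q > 0" and cop: "coprime a q" and fin: "finite Pr" and pr: "\<forall>p\<in>Pr. prime p"
    and sub: "Ps \<subseteq> Pr" and nh: "nh < q" and mh: "int q * mh = int nh * int a - h"
  shows "card {n. n < q * \<Prod>Pr \<and> admissible Pr Ps a q h n}
    = (\<Prod>p\<in>Pr. card {r. r < p \<and> local_admissible (p \<in> Ps) p a q (int nh) mh r})"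
proof -
  define P where "P = \<Prod>Pr"
  let ?T = "{t. t < P \<and> (\<forall>p\<in>Pr. local_admissible (p \<in> Ps) p a q (int nh) mh (t mod p))}"
  have "{n. n < q * P \<and> admissible Pr Ps a q h n} = (\<lambda>t. nh + q * t) ` ?T"
  proof (intro set_eqI iffI)
    fix n assume "n \<in> {n. n < q * P \<and> admissible Pr Ps a q h n}"
    then have n: "n < q * P" "admissible Pr Ps a q h n"
      by auto
    have "int q dvd int nh * int a - h"
      using mh by (metis dvd_triv_left)
    then have n_eq: "n = nh + q * (n div q)"
      using admissible_mod_eq [OF cop nh _ n(2)] by (metis mod_mult_div_eq)
    have "n div q < P"
      using n(1) q by (simp add: div_less_iff_less_mult mult.commute)
    moreover have "admissible Pr Ps a q h (nh + q * (n div q))"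
      using n(2) n_eq by simp
    ultimately have "n div q \<in> ?T"
      using admissible_shift_iff [OF q sub mh] by simp
    then show "n \<in> (\<lambda>t. nh + q * t) ` ?T"
      by (rule image_eqI [where f = "\<lambda>t. nh + q * t", OF n_eq])
  next
    fix n assume "n \<in> (\<lambda>t. nh + q * t) ` ?T"
    then obtain t where t: "t \<in> ?T" "n = nh + q * t"
      by auto
    have "q * Suc t \<le> q * P"
      using t(1) by (intro mult_le_mono2) simp
    then have "n < q * P"
      using nh t(2) by simp
    then show "n \<in> {n. n < q * P \<and> admissible Pr Ps a q h n}"
      using t admissible_shift_iff [OF q sub mh] by simp
  qed
  moreover have "inj_on (\<lambda>t. nh + q * t) ?T"
    using q by (auto simp: inj_on_def)
  ultimately have "card {n. n < q * P \<and> admissible Pr Ps a q h n} = card ?T"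
    by (simp add: card_image)
  also have "\<dots> = (\<Prod>p\<in>Pr. card {r. r < p \<and> local_admissible (p \<in> Ps) p a q (int nh) mh r})"
    unfolding P_def by (rule card_residues_prod_primes [OF fin pr])
  finally show ?thesis
    unfolding P_def .
qed

lemma card_admissible_period_le:
  assumes q: "q > 0" and cop: "coprime a q" and fin: "finite Pr" and pr: "\<forall>p\<in>Pr. prime p"
    and sub: "Ps \<subseteq> Pr"
  shows "real (card {n. n < q * \<Prod>Pr \<and> admissible Pr Ps a q h n})
    \<le> real (\<Prod>Pr) * (\<Prod>p\<in>Pr. local_const (p \<in> Ps) p a q + local_dvd (p \<in> Ps) p a q * of_bool (int p dvd h))"
proof -
  have "coprime (int a) (int q)"
    using cop by simp
  then obtain nh where nh: "nh < q" "int q dvd - h + int a * int nh"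
    using exists_residue_linear_congruence q by blast
  define mh where "mh = (int nh * int a - h) div int q"
  have mh: "int q * mh = int nh * int a - h"
    using nh(2) by (simp add: mh_def mult.commute)
  then have h: "int a * int nh - int q * mh = h"
    by (simp add: algebra_simps)
  have "real (card {n. n < q * \<Prod>Pr \<and> admissible Pr Ps a q h n})
      = (\<Prod>p\<in>Pr. real (card {r. r < p \<and> local_admissible (p \<in> Ps) p a q (int nh) mh r}))"
    by (simp add: card_admissible_period [OF q cop fin pr sub nh(1) mh])
  also have "\<dots> \<le> (\<Prod>p\<in>Pr. real p * (local_const (p \<in> Ps) p a q
      + local_dvd (p \<in> Ps) p a q * of_bool (int p dvd h)))"
    using pr card_local_admissible_le [OF _ cop h] by (intro prod_mono) auto
  also have "\<dots> = real (\<Prod>Pr) * (\<Prod>p\<in>Pr. local_const (p \<in> Ps) p a q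
      + local_dvd (p \<in> Ps) p a q * of_bool (int p dvd h))"
    by (simp add: prod.distrib)
  finally show ?thesis .
qed

section \<open>Measure of the sets \<open>Nset \<alpha>\<close>\<close>

definition primes_upto :: "real \<Rightarrow> nat set" where
  "primes_upto x = {p. prime p \<and> real p \<le> x}"

lemma finite_primes_upto: "finite (primes_upto x)"
  unfolding primes_upto_def by (rule finite_subset [of _ "{..nat \<lfloor>x\<rfloor>}"]) (auto simp: le_nat_floor)

lemma prime_primes_upto: "p \<in> primes_upto x \<Longrightarrow> prime p"
  by (simp add: primes_upto_def)

lemma prime_ge_2_primes_upto: "p \<in> primes_upto x \<Longrightarrow> p \<ge> 2"
  by (simp add: primes_upto_def prime_ge_2_nat)

lemma prod_primes_upto_pos: "\<Prod>(primes_upto x) > 0"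
proof (rule prod_pos)
  show "0 < p" if "p \<in> primes_upto x" for p
    using prime_ge_2_primes_upto [OF that] by simp
qed

lemma prod_primes_upto_pred_pos: "(\<Prod>p\<in>primes_upto x. real p - 1) > 0"
proof (rule prod_pos)
  show "0 < real p - 1" if "p \<in> primes_upto x" for p
    using prime_ge_2_primes_upto [OF that] by simp
qed

definition rough :: "real \<Rightarrow> nat set" where
  "rough \<alpha> = {n. n \<ge> 1 \<and> (\<forall>p\<in>primes_upto \<alpha>. \<not> p dvd n)}"

lemma lpf_gt_iff:
  assumes "n \<ge> 1"
  shows "lpf n > ereal \<alpha> \<longleftrightarrow> (\<forall>p\<in>primes_upto \<alpha>. \<not> p dvd n)"
proof (cases "n = 1")
  case True
  then show ?thesis
    by (auto simp: lpf_def primes_upto_def)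
next
  case False
  then obtain p where "prime p" "p dvd n"
    using prime_factor_nat by blast
  then have "p \<in> prime_factors n"
    using assms by (simp add: in_prime_factors_iff)
  then have "prime_factors n \<noteq> {}"
    by (metis empty_iff)
  then have min: "Min (prime_factors n) \<in> prime_factors n"
    "\<And>p. p \<in> prime_factors n \<Longrightarrow> Min (prime_factors n) \<le> p"
    by simp_all
  have "lpf n > ereal \<alpha> \<longleftrightarrow> \<alpha> < real (Min (prime_factors n))"
    using False by (simp add: lpf_def)
  also have "\<dots> \<longleftrightarrow> (\<forall>p\<in>prime_factors n. \<alpha> < real p)"
  proof
    assume "\<alpha> < real (Min (prime_factors n))"
    then show "\<forall>p\<in>prime_factors n. \<alpha> < real p"
      using min(2) by (meson of_nat_le_iff less_le_trans)
  qed (use min(1) in blast)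
  also have "\<dots> \<longleftrightarrow> (\<forall>p\<in>primes_upto \<alpha>. \<not> p dvd n)"
  proof
    assume H: "\<forall>p\<in>prime_factors n. \<alpha> < real p"
    show "\<forall>p\<in>primes_upto \<alpha>. \<not> p dvd n"
    proof (intro ballI notI)
      fix p assume "p \<in> primes_upto \<alpha>" "p dvd n"
      then have "p \<in> prime_factors n" "real p \<le> \<alpha>"
        using assms by (auto simp: primes_upto_def in_prime_factors_iff)
      moreover have "\<alpha> < real p"
        using H \<open>p \<in> prime_factors n\<close> by blast
      ultimately show False
        by linarith
    qed
  next
    assume H: "\<forall>p\<in>primes_upto \<alpha>. \<not> p dvd n"
    show "\<forall>p\<in>prime_factors n. \<alpha> < real p"
    proof
      fix p assume "p \<in> prime_factors n"
      then have "prime p" "p dvd n"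
        by (auto simp: in_prime_factors_iff)
      show "\<alpha> < real p"
      proof (rule ccontr)
        assume "\<not> \<alpha> < real p"
        then have "p \<in> primes_upto \<alpha>"
          using \<open>prime p\<close> by (simp add: primes_upto_def)
        then show False
          using H \<open>p dvd n\<close> by blast
      qed
    qed
  qed
  finally show ?thesis .
qed

lemma Nset_eq_Union_ball: "Nset \<alpha> = (\<Union>n\<in>rough \<alpha>. ball (real n * \<alpha>) (1/2))"
proof -
  have "{n. n \<ge> 1 \<and> lpf n > ereal \<alpha>} = rough \<alpha>"
    using lpf_gt_iff by (auto simp: rough_def)
  then show ?thesis
    by (simp add: Nset_def ball_eq_greaterThanLessThan)
qed

lemma open_Nset: "open (Nset \<alpha>)"
  unfolding Nset_eq_Union_ball by auto

lemma Nset_sets: "Nset \<alpha> \<in> sets lebesgue"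
  using open_Nset by simp

lemma Nset_Int_atLeastAtMost_fmeasurable: "Nset \<alpha> \<inter> {0..T} \<in> fmeasurable lebesgue"
  using fmeasurable_Int_fmeasurable [of "{0..T}" lebesgue "Nset \<alpha>"] Nset_sets
  by (simp add: Int_commute)

lemma measure_ball_Int_ball:
  fixes x y r :: real
  shows "measure lebesgue (ball x r \<inter> ball y r) = max 0 (2 * r - \<bar>x - y\<bar>)"
proof -
  have eq: "ball x r \<inter> ball y r = {max x y - r <..< min x y + r}"
    by (auto simp: ball_eq_greaterThanLessThan)
  show ?thesis
  proof (cases "\<bar>x - y\<bar> \<le> 2 * r")
    case True
    then show ?thesis
      unfolding eq by (auto simp: max_def min_def abs_if)
  next
    case False
    then have "x + 2 * r < y \<or> y + 2 * r < x"
      by (auto simp: abs_le_iff)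
    then have "{max x y - r <..< min x y + r} = {}"
      by (auto simp: max_def min_def)
    then show ?thesis
      unfolding eq using False by simp
  qed
qed

lemma card_rough_le_measure:
  fixes \<alpha> T :: real
  assumes "\<alpha> \<ge> 1" "real N * \<alpha> + 1/2 \<le> T"
  shows "real (card {n. 1 \<le> n \<and> n \<le> N \<and> n \<in> rough \<alpha>}) \<le> measure lebesgue (Nset \<alpha> \<inter> {0..T})"
proof -
  define F where "F = {n. 1 \<le> n \<and> n \<le> N \<and> n \<in> rough \<alpha>}"
  have "finite F"
    unfolding F_def by (rule finite_subset [of _ "{..N}"]) auto
  have sub: "(\<Union>n\<in>F. ball (real n * \<alpha>) (1/2)) \<subseteq> Nset \<alpha> \<inter> {0..T}"
  proof
    fix x assume "x \<in> (\<Union>n\<in>F. ball (real n * \<alpha>) (1/2))"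
    then obtain n where n: "n \<in> F" "x \<in> ball (real n * \<alpha>) (1/2)"
      by auto
    have "real n * \<alpha> \<le> real N * \<alpha>"
      using n(1) assms(1) by (intro mult_right_mono) (auto simp: F_def)
    moreover have "1 * 1 \<le> real n * \<alpha>"
      using n(1) assms(1) by (intro mult_mono) (auto simp: F_def)
    ultimately have "0 \<le> x" "x \<le> T"
      using n(2) assms(2) by (auto simp: ball_eq_greaterThanLessThan)
    then show "x \<in> Nset \<alpha> \<inter> {0..T}"
      using n by (auto simp: Nset_eq_Union_ball F_def)
  qed
  have disj: "pairwise (\<lambda>i j :: nat. disjnt (ball (real i * \<alpha>) (1/2)) (ball (real j * \<alpha>) (1/2))) F"
  proof (rule pairwiseI)
    fix i j :: nat assume "i \<in> F" "j \<in> F" "i \<noteq> j"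
    then have "\<bar>real i - real j\<bar> \<ge> 1"
      by linarith
    then have "\<bar>real i - real j\<bar> * \<alpha> \<ge> 1 * 1"
      using assms(1) by (intro mult_mono) auto
    then have "\<bar>real i * \<alpha> - real j * \<alpha>\<bar> \<ge> 1"
      using assms(1) by (simp add: abs_mult left_diff_distrib [symmetric])
    then show "disjnt (ball (real i * \<alpha>) (1/2)) (ball (real j * \<alpha>) (1/2))"
      by (auto simp: disjnt_def ball_eq_greaterThanLessThan)
  qed
  have "measure lebesgue (\<Union>n\<in>F. ball (real n * \<alpha>) (1/2))
      = (\<Sum>n\<in>F. measure lebesgue (ball (real n * \<alpha>) (1/2)))"
    by (rule measure_UNION' [OF \<open>finite F\<close> _ disj]) simp
  also have "\<dots> = real (card F)"
    by (simp add: ball_eq_greaterThanLessThan)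
  finally have "real (card F) = measure lebesgue (\<Union>n\<in>F. ball (real n * \<alpha>) (1/2))"
    by simp
  also have "\<dots> \<le> measure lebesgue (Nset \<alpha> \<inter> {0..T})"
    using sub \<open>finite F\<close> by (intro measure_mono_fmeasurable Nset_Int_atLeastAtMost_fmeasurable) auto
  finally show ?thesis
    by (simp add: F_def)
qed

lemma card_rough_atMost_ge:
  assumes "\<gamma> \<ge> 2"
  shows "real (N div \<Prod>(primes_upto \<gamma>)) * (\<Prod>p\<in>primes_upto \<gamma>. real p - 1)
    \<le> real (card {n. 1 \<le> n \<and> n \<le> N \<and> n \<in> rough \<gamma>})"
proof -
  define S where "S = primes_upto \<gamma>"
  define g where "g n \<longleftrightarrow> (\<forall>p\<in>S. \<not> p dvd n)" for n
  have fin: "finite S" and pr: "\<forall>p\<in>S. prime p"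
    by (auto simp: S_def finite_primes_upto prime_primes_upto)
  have per: "g (n + \<Prod>S) = g n" for n
  proof -
    have "p dvd \<Prod>S" if "p \<in> S" for p
      using dvd_prodI [OF fin that, of id] by simp
    then show ?thesis
      by (auto simp: g_def dvd_add_left_iff)
  qed
  have "2 \<in> S"
    using assms by (simp add: S_def primes_upto_def)
  then have "\<not> g 0"
    by (auto simp: g_def)
  have card_period: "real (card {n. n < \<Prod>S \<and> g n}) = (\<Prod>p\<in>S. real p - 1)"
  proof -
    have "real (p - 1) = real p - 1" if "p \<in> S" for p
      using pr that prime_ge_1_nat by (simp add: of_nat_diff)
    then show ?thesis
      by (simp add: g_def card_coprime_residues_prod_primes [OF fin pr] of_nat_prod cong: prod.cong)
  qed
  have "(N div \<Prod>S) * card {n. n < \<Prod>S \<and> g n} \<le> card {n. 1 \<le> n \<and> n \<le> N \<and> g n}"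
    by (rule card_periodic_atMost_ge [OF per \<open>\<not> g 0\<close>])
  then have "real (N div \<Prod>S) * real (card {n. n < \<Prod>S \<and> g n})
      \<le> real (card {n. 1 \<le> n \<and> n \<le> N \<and> g n})"
    by (simp only: of_nat_mult [symmetric] of_nat_le_iff)
  moreover have "{n. 1 \<le> n \<and> n \<le> N \<and> g n} = {n. 1 \<le> n \<and> n \<le> N \<and> n \<in> rough \<gamma>}"
    by (auto simp: g_def S_def rough_def)
  ultimately show ?thesis
    using card_period unfolding S_def by simp
qed

lemma real_div_nat_ge: "real m / real n - 1 \<le> real (m div n)"
proof -
  have "real m / real n < real_of_int \<lfloor>real m / real n\<rfloor> + 1"
    using floor_correct [of "real m / real n"] by simp
  also have "\<lfloor>real m / real n\<rfloor> = int (m div n)"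
    by (rule floor_divide_of_nat_eq)
  finally show ?thesis
    by simp
qed

lemma measure_Nset_ge:
  fixes \<gamma> T :: real
  assumes "\<gamma> \<ge> 2" "T \<ge> 1"
  defines "Q \<equiv> real (\<Prod>(primes_upto \<gamma>))" and "\<phi> \<equiv> (\<Prod>p\<in>primes_upto \<gamma>. real p - 1)"
  shows "T * (\<phi> / (\<gamma> * Q)) - \<phi> * (1 / (2 * \<gamma> * Q) + 1 / Q + 1) \<le> measure lebesgue (Nset \<gamma> \<inter> {0..T})"
proof -
  define N where "N = nat \<lfloor>(T - 1/2) / \<gamma>\<rfloor>"
  have "\<gamma> > 0"
    using assms(1) by simp
  have "Q > 0"
    unfolding Q_def using prod_primes_upto_pos [of \<gamma>] by (simp only: of_nat_0_less_iff)
  have "\<phi> > 0"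
    unfolding \<phi>_def by (rule prod_primes_upto_pred_pos)
  have "real N \<le> (T - 1/2) / \<gamma>" "real N \<ge> (T - 1/2) / \<gamma> - 1"
    using assms(2) \<open>\<gamma> > 0\<close> by (auto simp: N_def)
  then have "real N * \<gamma> + 1/2 \<le> T"
    using \<open>\<gamma> > 0\<close> by (simp add: field_simps)
  have "real (N div \<Prod>(primes_upto \<gamma>)) \<ge> real N / Q - 1"
    unfolding Q_def by (rule real_div_nat_ge)
  moreover have "((T - 1/2) / \<gamma> - 1) / Q \<le> real N / Q"
    using \<open>real N \<ge> _\<close> \<open>Q > 0\<close> by (simp add: divide_right_mono)
  ultimately have "(((T - 1/2) / \<gamma> - 1) / Q - 1) * \<phi> \<le> real (N div \<Prod>(primes_upto \<gamma>)) * \<phi>"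
    using \<open>\<phi> > 0\<close> by (intro mult_right_mono) auto
  also have "\<dots> \<le> measure lebesgue (Nset \<gamma> \<inter> {0..T})"
    using card_rough_atMost_ge [OF assms(1), of N] card_rough_le_measure [OF _ \<open>real N * \<gamma> + 1/2 \<le> T\<close>]
      assms(1) by (simp add: \<phi>_def)
  finally show ?thesis
    using \<open>\<gamma> > 0\<close> \<open>Q > 0\<close> by (simp add: field_simps)
qed

lemma centre_diff_eq:
  fixes \<alpha> \<beta> :: real and a q :: nat
  assumes "\<beta> > 0" "q > 0" "\<alpha> = real a * \<beta> / real q"
  shows "real n * \<alpha> - real_of_int m * \<beta> = real_of_int (int n * int a - m * int q) / (real q / \<beta>)"
  using assms by (simp add: field_simps)

lemma abs_less_subset_ceiling_interval:
  "{j. \<bar>real_of_int j\<bar> < H} \<subseteq> {-\<lceil>H\<rceil>..\<lceil>H\<rceil>}"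
proof
  fix j assume "j \<in> {j. \<bar>real_of_int j\<bar> < H}"
  then have "\<bar>real_of_int j\<bar> < H"
    by simp
  then have "real_of_int \<bar>j\<bar> \<le> real_of_int \<lceil>H\<rceil>"
    using le_of_int_ceiling [of H] by linarith
  then show "j \<in> {-\<lceil>H\<rceil>..\<lceil>H\<rceil>}"
    by (simp only: of_int_le_iff) (auto simp: abs_le_iff)
qed

lemma Nset_Int_subset_admissible_balls:
  fixes \<alpha> \<beta> T :: real and a q :: nat
  assumes "\<beta> > 0" "q > 0" "\<alpha> = real a * \<beta> / real q" "\<beta> \<le> \<alpha>"
  defines "H \<equiv> real q / \<beta>" and "N \<equiv> nat \<lfloor>(T + 1) / \<alpha>\<rfloor>"
  shows "Nset \<alpha> \<inter> Nset \<beta> \<inter> {0..T} \<subseteq> (\<Union>(h, n)\<in>Sigma {-\<lceil>H\<rceil>..\<lceil>H\<rceil>}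
      (\<lambda>h. {n. 1 \<le> n \<and> n \<le> N \<and> admissible (primes_upto \<alpha>) (primes_upto \<beta>) a q h n}).
      ball (real n * \<alpha>) (1/2) \<inter> ball (real_of_int ((int n * int a - h) div int q) * \<beta>) (1/2))"
proof (intro subsetI)
  fix x assume x: "x \<in> Nset \<alpha> \<inter> Nset \<beta> \<inter> {0..T}"
  then obtain n m where n: "n \<in> rough \<alpha>" "x \<in> ball (real n * \<alpha>) (1/2)"
    and m: "m \<in> rough \<beta>" "x \<in> ball (real m * \<beta>) (1/2)"
    by (auto simp: Nset_eq_Union_ball)
  define h where "h = int n * int a - int m * int q"
  have "H > 0" "\<alpha> > 0"
    using assms(1,2,4) by (auto simp: H_def)
  have "\<bar>real n * \<alpha> - real m * \<beta>\<bar> < 1"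
    using n(2) m(2) by (auto simp: ball_eq_greaterThanLessThan)
  moreover have "real n * \<alpha> - real_of_int (int m) * \<beta> = real_of_int h / H"
    unfolding h_def H_def by (rule centre_diff_eq [OF assms(1-3)])
  ultimately have "\<bar>real_of_int h\<bar> / H < 1"
    using \<open>H > 0\<close> by simp
  then have "\<bar>real_of_int h\<bar> < H"
    using \<open>H > 0\<close> by (simp add: field_simps)
  then have "h \<in> {-\<lceil>H\<rceil>..\<lceil>H\<rceil>}"
    using abs_less_subset_ceiling_interval by blast
  have "real n * \<alpha> < T + 1"
    using n(2) x by (auto simp: ball_eq_greaterThanLessThan)
  then have "n \<le> N"
    using \<open>\<alpha> > 0\<close> by (simp add: N_def le_nat_floor le_floor_iff field_simps)
  have m_eq: "(int n * int a - h) div int q = int m"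
    using assms(2) by (simp add: h_def)
  have adm: "admissible (primes_upto \<alpha>) (primes_upto \<beta>) a q h n"
    using n(1) m(1) m_eq by (auto simp: admissible_def rough_def h_def)
  show "x \<in> (\<Union>(h, n)\<in>Sigma {-\<lceil>H\<rceil>..\<lceil>H\<rceil>}
      (\<lambda>h. {n. 1 \<le> n \<and> n \<le> N \<and> admissible (primes_upto \<alpha>) (primes_upto \<beta>) a q h n}).
      ball (real n * \<alpha>) (1/2) \<inter> ball (real_of_int ((int n * int a - h) div int q) * \<beta>) (1/2))"
  proof (rule UN_I [of "(h, n)"])
    show "(h, n) \<in> Sigma {-\<lceil>H\<rceil>..\<lceil>H\<rceil>}
        (\<lambda>h. {n. 1 \<le> n \<and> n \<le> N \<and> admissible (primes_upto \<alpha>) (primes_upto \<beta>) a q h n})"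
      using \<open>h \<in> _\<close> \<open>n \<le> N\<close> n(1) adm by (simp add: rough_def)
  qed (use n(2) m(2) m_eq in simp)
qed

lemma measure_Nset_Int_le:
  fixes \<alpha> \<beta> T :: real and a q :: nat
  assumes "\<beta> > 0" "q > 0" "\<alpha> = real a * \<beta> / real q" "\<beta> \<le> \<alpha>"
  defines "H \<equiv> real q / \<beta>" and "N \<equiv> nat \<lfloor>(T + 1) / \<alpha>\<rfloor>"
  shows "measure lebesgue (Nset \<alpha> \<inter> Nset \<beta> \<inter> {0..T}) \<le> (\<Sum>h\<in>{-\<lceil>H\<rceil>..\<lceil>H\<rceil>}.
      tent H h * real (card {n. 1 \<le> n \<and> n \<le> N \<and> admissible (primes_upto \<alpha>) (primes_upto \<beta>) a q h n}))"
proof -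
  define G where "G h = {n. 1 \<le> n \<and> n \<le> N \<and> admissible (primes_upto \<alpha>) (primes_upto \<beta>) a q h n}" for h
  define F where "F = (\<lambda>(h, n). ball (real n * \<alpha>) (1/2)
      \<inter> ball (real_of_int ((int n * int a - h) div int q) * \<beta>) (1/2))"
  define I where "I = Sigma {-\<lceil>H\<rceil>..\<lceil>H\<rceil>} G"
  have fin_G: "finite (G h)" for h
    unfolding G_def by (rule finite_subset [of _ "{..N}"]) auto
  then have "finite I"
    by (simp add: I_def)
  have F_meas: "F i \<in> fmeasurable lebesgue" for i
    by (auto simp: F_def split: prod.split intro!: fmeasurable_Int_fmeasurable)
  have "H > 0"
    using assms(1,2) by (simp add: H_def)
  have measure_F: "measure lebesgue (F i) = tent H (fst i)" if i_in: "i \<in> I" for i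
  proof -
    obtain h n where i: "i = (h, n)" "n \<in> G h"
      using i_in unfolding I_def by blast
    then have "admissible (primes_upto \<alpha>) (primes_upto \<beta>) a q h n"
      by (simp add: G_def)
    define m where "m = (int n * int a - h) div int q"
    have "real n * \<alpha> - real_of_int m * \<beta> = real_of_int (int n * int a - m * int q) / H"
      unfolding H_def by (rule centre_diff_eq [OF assms(1-3)])
    also have "int n * int a - m * int q = h"
      using \<open>admissible _ _ a q h n\<close> by (simp add: admissible_def m_def)
    finally have "real n * \<alpha> - real_of_int m * \<beta> = real_of_int h / H" .
    then show ?thesis
      using \<open>H > 0\<close> by (simp add: F_def i(1) m_def measure_ball_Int_ball tent_def)
  qed
  have "measure lebesgue (Nset \<alpha> \<inter> Nset \<beta> \<inter> {0..T}) \<le> measure lebesgue (\<Union>i\<in>I. F i)"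
  proof (rule measure_mono_fmeasurable)
    show "Nset \<alpha> \<inter> Nset \<beta> \<inter> {0..T} \<subseteq> (\<Union>i\<in>I. F i)"
      using Nset_Int_subset_admissible_balls [OF assms(1-4), of T]
      by (simp add: F_def I_def G_def [abs_def] H_def N_def)
    show "Nset \<alpha> \<inter> Nset \<beta> \<inter> {0..T} \<in> sets lebesgue"
      using Nset_sets by auto
    show "(\<Union>i\<in>I. F i) \<in> fmeasurable lebesgue"
      using \<open>finite I\<close> F_meas by (intro fmeasurable.finite_UN) auto
  qed
  also have "\<dots> \<le> (\<Sum>i\<in>I. measure lebesgue (F i))"
    using \<open>finite I\<close> F_meas by (intro measure_UNION_le) auto
  also have "\<dots> = (\<Sum>i\<in>I. tent H (fst i))"
    using measure_F by (rule sum.cong [OF refl])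
  also have "\<dots> = (\<Sum>h\<in>{-\<lceil>H\<rceil>..\<lceil>H\<rceil>}. \<Sum>n\<in>G h. tent H h)"
    unfolding I_def using sum.Sigma [of "{-\<lceil>H\<rceil>..\<lceil>H\<rceil>}" G "\<lambda>h n. tent H h"] fin_G
    by (simp add: case_prod_beta)
  also have "\<dots> = (\<Sum>h\<in>{-\<lceil>H\<rceil>..\<lceil>H\<rceil>}. tent H h * real (card (G h)))"
    by (simp add: mult.commute)
  finally show ?thesis
    by (simp add: G_def)
qed

section \<open>The correlation ratio\<close>

lemma prod_ratio_pred_telescope:
  assumes "n \<ge> 1"
  shows "(\<Prod>k\<in>{2..n}. real k / (real k - 1)) = real n"
  using assms
proof (induction n rule: dec_induct)
  case (step n)
  then have "{2..Suc n} = insert (Suc n) {2..n}"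
    by auto
  then show ?case
    using step by simp
qed simp

lemma prod_primes_upto_ratio_le:
  fixes \<beta> :: real
  assumes "\<beta> \<ge> 1"
  shows "(\<Prod>p\<in>primes_upto \<beta>. real p / (real p - 1)) \<le> \<beta>"
proof -
  define n where "n = nat \<lfloor>\<beta>\<rfloor>"
  have "n \<ge> 1" "real n \<le> \<beta>"
    using assms by (simp_all add: n_def le_nat_floor)
  have "primes_upto \<beta> \<subseteq> {2..n}"
    by (auto simp: primes_upto_def n_def prime_ge_2_nat le_nat_floor)
  then have "(\<Prod>p\<in>primes_upto \<beta>. real p / (real p - 1)) \<le> (\<Prod>k\<in>{2..n}. real k / (real k - 1))"
    by (intro prod_mono2) (auto dest: prime_ge_2_primes_upto)
  also have "\<dots> = real n"
    by (rule prod_ratio_pred_telescope [OF \<open>n \<ge> 1\<close>])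
  finally show ?thesis
    using \<open>real n \<le> \<beta>\<close> by simp
qed

lemma divide_divide_times_divide_cancel:
  fixes A B C T :: real
  assumes "T \<noteq> 0"
  shows "(A / T) / ((B / T) * (C / T)) = T * A / (B * C)"
  using assms by (cases "B = 0 \<or> C = 0") (auto simp: field_simps)

lemma tendsto_affine_ratio:
  fixes x1 x2 y1 y2 z1 z2 :: real
  assumes "y1 > 0" "z1 > 0"
  shows "((\<lambda>T. T * (T * x1 + x2) / ((T * y1 - y2) * (T * z1 - z2))) \<longlongrightarrow> x1 / (y1 * z1)) at_top"
proof -
  have "((\<lambda>T. (x1 + x2 * inverse T) / ((y1 - y2 * inverse T) * (z1 - z2 * inverse T)))
      \<longlongrightarrow> (x1 + x2 * 0) / ((y1 - y2 * 0) * (z1 - z2 * 0))) at_top"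
    using assms by (intro tendsto_intros tendsto_inverse_0_at_top filterlim_ident) auto
  moreover have "\<forall>\<^sub>F T in at_top. (x1 + x2 * inverse T) / ((y1 - y2 * inverse T) * (z1 - z2 * inverse T))
      = T * (T * x1 + x2) / ((T * y1 - y2) * (T * z1 - z2))"
    using eventually_gt_at_top [of 0]
  proof eventually_elim
    case (elim T)
    then have "x1 + x2 * inverse T = (T * x1 + x2) / T" "y1 - y2 * inverse T = (T * y1 - y2) / T"
        "z1 - z2 * inverse T = (T * z1 - z2) / T"
      by (simp_all add: field_simps)
    then show ?case
      using elim by (simp add: divide_divide_times_divide_cancel)
  qed
  ultimately show ?thesis
    using tendsto_cong by force
qed

lemma Limsup_ratio_le:
  fixes f g k :: "real \<Rightarrow> real" and x1 x2 y1 y2 z1 z2 T0 :: real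
  assumes "y1 > 0" "z1 > 0"
    and f: "\<And>T. T \<ge> T0 \<Longrightarrow> 0 \<le> f T \<and> f T \<le> T * x1 + x2"
    and g: "\<And>T. T \<ge> T0 \<Longrightarrow> g T \<ge> T * y1 - y2"
    and k: "\<And>T. T \<ge> T0 \<Longrightarrow> k T \<ge> T * z1 - z2"
  shows "Limsup at_top (\<lambda>T. ereal ((f T / T) / ((g T / T) * (k T / T)))) \<le> ereal (x1 / (y1 * z1))"
proof -
  define U where "U T = T * (T * x1 + x2) / ((T * y1 - y2) * (T * z1 - z2))" for T
  have "\<forall>\<^sub>F T in at_top. ereal ((f T / T) / ((g T / T) * (k T / T))) \<le> ereal (U T)"
    using eventually_ge_at_top [of "max T0 (max 1 (max (y2 / y1 + 1) (z2 / z1 + 1)))"]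
  proof eventually_elim
    case (elim T)
    then have "T \<ge> T0" "T > 0"
      by auto
    have "T * y1 - y2 > 0" "T * z1 - z2 > 0"
      using elim assms(1,2) by (auto simp: field_simps)
    have le: "T * f T / (g T * k T) \<le> T * (T * x1 + x2) / ((T * y1 - y2) * (T * z1 - z2))"
    proof (rule frac_le)
      show "0 \<le> T * (T * x1 + x2)" "T * f T \<le> T * (T * x1 + x2)"
        using f [OF \<open>T \<ge> T0\<close>] \<open>T > 0\<close> by auto
      show "0 < (T * y1 - y2) * (T * z1 - z2)"
        using \<open>T * y1 - y2 > 0\<close> \<open>T * z1 - z2 > 0\<close> by simp
      show "(T * y1 - y2) * (T * z1 - z2) \<le> g T * k T"
        using g [OF \<open>T \<ge> T0\<close>] k [OF \<open>T \<ge> T0\<close>] \<open>T * y1 - y2 > 0\<close> \<open>T * z1 - z2 > 0\<close>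
        by (intro mult_mono) auto
    qed
    have eq: "(f T / T) / ((g T / T) * (k T / T)) = T * f T / (g T * k T)"
      using \<open>T > 0\<close> by (simp add: divide_divide_times_divide_cancel)
    show ?case
      unfolding U_def eq using le by (simp only: ereal_less_eq(3))
  qed
  then have "Limsup at_top (\<lambda>T. ereal ((f T / T) / ((g T / T) * (k T / T))))
      \<le> Limsup at_top (\<lambda>T. ereal (U T))"
    by (rule Limsup_mono)
  also have "Limsup at_top (\<lambda>T. ereal (U T)) = ereal (x1 / (y1 * z1))"
    unfolding U_def using tendsto_affine_ratio [OF assms(1,2)]
    by (intro lim_imp_Limsup) (simp_all add: lim_ereal)
  finally show ?thesis .
qed

lemma primes_upto_mono: "x \<le> y \<Longrightarrow> primes_upto x \<subseteq> primes_upto y"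
  by (auto simp: primes_upto_def)

definition sieve_main :: "real \<Rightarrow> real \<Rightarrow> nat \<Rightarrow> nat \<Rightarrow> real" where
  "sieve_main \<alpha> \<beta> a q = (\<Prod>p\<in>primes_upto \<alpha>.
     local_const (p \<in> primes_upto \<beta>) p a q + local_dvd (p \<in> primes_upto \<beta>) p a q / p)"

definition sieve_error :: "real \<Rightarrow> real \<Rightarrow> nat \<Rightarrow> nat \<Rightarrow> real" where
  "sieve_error \<alpha> \<beta> a q = (\<Prod>p\<in>primes_upto \<alpha>.
     \<bar>local_const (p \<in> primes_upto \<beta>) p a q\<bar> + \<bar>local_dvd (p \<in> primes_upto \<beta>) p a q\<bar>)"

lemma sieve_main_eq:
  assumes "\<beta> \<le> \<alpha>"
  shows "sieve_main \<alpha> \<beta> a q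
    = (\<Prod>p\<in>primes_upto \<alpha>. (real p - 1) / p) * (\<Prod>p\<in>primes_upto \<beta>. (real p - 1) / p)"
proof -
  have "(\<Prod>p\<in>primes_upto \<alpha>. local_const (p \<in> primes_upto \<beta>) p a q
        + local_dvd (p \<in> primes_upto \<beta>) p a q / p)
      = (\<Prod>p\<in>primes_upto \<alpha>. ((real p - 1) / p) * (if p \<in> primes_upto \<beta> then (real p - 1) / p else 1))"
    by (intro prod.cong refl local_mean prime_ge_2_primes_upto)
  also have "\<dots> = (\<Prod>p\<in>primes_upto \<alpha>. (real p - 1) / p)
      * (\<Prod>p\<in>primes_upto \<alpha>. if p \<in> primes_upto \<beta> then (real p - 1) / p else 1)"
    by (rule prod.distrib)
  also have "(\<Prod>p\<in>primes_upto \<alpha>. if p \<in> primes_upto \<beta> then (real p - 1) / p else 1)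
      = (\<Prod>p\<in>{p \<in> primes_upto \<alpha>. p \<in> primes_upto \<beta>}. (real p - 1) / p)"
    by (rule prod.inter_filter [OF finite_primes_upto, symmetric])
  also have "{p \<in> primes_upto \<alpha>. p \<in> primes_upto \<beta>} = primes_upto \<beta>"
    using primes_upto_mono [OF assms] by auto
  finally show ?thesis
    unfolding sieve_main_def .
qed

definition exceptional_primes :: "real \<Rightarrow> real \<Rightarrow> nat \<Rightarrow> nat \<Rightarrow> nat set" where
  "exceptional_primes \<alpha> \<beta> a q = {p \<in> primes_upto \<alpha>. p dvd q \<or> real p \<le> \<beta> \<and> p dvd a}"

lemma sieve_error_le:
  assumes "2 \<le> \<beta>" "\<beta> \<le> \<alpha>"
  shows "sieve_error \<alpha> \<beta> a q \<le> sieve_main \<alpha> \<beta> a q * (\<beta> * 3 ^ card (exceptional_primes \<alpha> \<beta> a q))"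
proof -
  let ?small = "\<lambda>p. p \<in> primes_upto \<beta>"
  define g where "g p = (if ?small p then real p / (real p - 1) else 1)
      * (if p dvd q \<or> ?small p \<and> p dvd a then 3 else 1)" for p
  have "(\<Prod>p\<in>primes_upto \<alpha>. \<bar>local_const (?small p) p a q\<bar> + \<bar>local_dvd (?small p) p a q\<bar>)
      \<le> (\<Prod>p\<in>primes_upto \<alpha>. (local_const (?small p) p a q + local_dvd (?small p) p a q / p) * g p)"
  proof (intro prod_mono conjI)
    fix p assume p: "p \<in> primes_upto \<alpha>"
    have "\<not> ?small p \<Longrightarrow> p \<ge> 3"
      using p assms(1) by (simp add: primes_upto_def)
    then show "\<bar>local_const (?small p) p a q\<bar> + \<bar>local_dvd (?small p) p a q\<bar>
        \<le> (local_const (?small p) p a q + local_dvd (?small p) p a q / p) * g p"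
      unfolding g_def by (intro local_abs_le prime_ge_2_primes_upto [OF p]) auto
  qed simp
  also have "\<dots> = (\<Prod>p\<in>primes_upto \<alpha>. local_const (?small p) p a q + local_dvd (?small p) p a q / p)
      * ((\<Prod>p\<in>primes_upto \<beta>. real p / (real p - 1)) * 3 ^ card (exceptional_primes \<alpha> \<beta> a q))"
  proof -
    have "{p \<in> primes_upto \<alpha>. ?small p} = primes_upto \<beta>"
      using primes_upto_mono [OF assms(2)] by auto
    moreover have "{p \<in> primes_upto \<alpha>. p dvd q \<or> ?small p \<and> p dvd a} = exceptional_primes \<alpha> \<beta> a q"
      by (auto simp: exceptional_primes_def primes_upto_def)
    ultimately show ?thesis
      by (simp add: g_def prod.distrib prod.inter_filter [OF finite_primes_upto, symmetric])
  qed
  also have "\<dots> \<le> (\<Prod>p\<in>primes_upto \<alpha>. local_const (?small p) p a q + local_dvd (?small p) p a q / p)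
      * (\<beta> * 3 ^ card (exceptional_primes \<alpha> \<beta> a q))"
  proof (intro mult_left_mono mult_right_mono)
    show "(\<Prod>p\<in>primes_upto \<beta>. real p / (real p - 1)) \<le> \<beta>"
      using assms(1) by (intro prod_primes_upto_ratio_le) simp
    show "0 \<le> (\<Prod>p\<in>primes_upto \<alpha>. local_const (?small p) p a q + local_dvd (?small p) p a q / p)"
    proof (rule prod_nonneg)
      fix p assume "p \<in> primes_upto \<alpha>"
      then have "p \<ge> 2"
        by (rule prime_ge_2_primes_upto)
      then show "0 \<le> local_const (?small p) p a q + local_dvd (?small p) p a q / p"
        by (simp add: local_mean)
    qed
  qed simp
  finally show ?thesis
    unfolding sieve_main_def sieve_error_def .
qed

lemma sieve_main_pos:
  assumes "\<beta> \<le> \<alpha>"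
  shows "sieve_main \<alpha> \<beta> a q > 0"
  unfolding sieve_main_eq [OF assms]
  by (intro mult_pos_pos prod_pos) (auto dest: prime_ge_2_primes_upto)

lemma sum_tent_card_admissible_le:
  assumes "\<beta> > 0" "\<beta> \<le> \<alpha>" "q > 0" "coprime a q"
  defines "Pr \<equiv> primes_upto \<alpha>" and "H \<equiv> real q / \<beta>"
  shows "(\<Sum>h\<in>{-\<lceil>H\<rceil>..\<lceil>H\<rceil>}. tent H h
        * real (card {n. n < q * \<Prod>Pr \<and> admissible Pr (primes_upto \<beta>) a q h n}))
    \<le> real (\<Prod>Pr) * (H * sieve_main \<alpha> \<beta> a q + sieve_error \<alpha> \<beta> a q)"
proof -
  let ?Ps = "primes_upto \<beta>"
  let ?f = "\<lambda>h. \<Prod>p\<in>Pr. local_const (p \<in> ?Ps) p a q + local_dvd (p \<in> ?Ps) p a q * of_bool (int p dvd h)"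
  have Pr: "finite Pr" "\<forall>p\<in>Pr. prime p" "?Ps \<subseteq> Pr"
    using assms(2) by (auto simp: Pr_def finite_primes_upto prime_primes_upto primes_upto_mono)
  have "(\<Sum>h\<in>{-\<lceil>H\<rceil>..\<lceil>H\<rceil>}. tent H h * real (card {n. n < q * \<Prod>Pr \<and> admissible Pr ?Ps a q h n}))
      \<le> (\<Sum>h\<in>{-\<lceil>H\<rceil>..\<lceil>H\<rceil>}. tent H h * (real (\<Prod>Pr) * ?f h))"
    using card_admissible_period_le [OF assms(3,4) Pr] by (intro sum_mono mult_left_mono tent_nonneg)
  also have "\<dots> = real (\<Prod>Pr) * (\<Sum>h\<in>{-\<lceil>H\<rceil>..\<lceil>H\<rceil>}. tent H h * ?f h)"
    by (simp add: sum_distrib_left mult_ac)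
  also have "\<dots> \<le> real (\<Prod>Pr) * (H * sieve_main \<alpha> \<beta> a q + sieve_error \<alpha> \<beta> a q)"
    unfolding sieve_main_def sieve_error_def Pr_def [symmetric]
    using assms(1,3) Pr(1,2) abs_less_subset_ceiling_interval
    by (intro mult_left_mono tent_sieve_bound) (auto simp: H_def intro: prod_nonneg)
  finally show ?thesis .
qed

lemma measure_Nset_Int_le_affine:
  fixes \<alpha> \<beta> T :: real and a q :: nat
  assumes "\<beta> > 0" "\<beta> \<le> \<alpha>" "q > 0" "coprime a q" "\<alpha> = real a * \<beta> / real q" "T \<ge> 1"
  defines "P \<equiv> \<Prod>(primes_upto \<alpha>)" and "H \<equiv> real q / \<beta>"
  shows "measure lebesgue (Nset \<alpha> \<inter> Nset \<beta> \<inter> {0..T})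
    \<le> ((T + 1) / (\<alpha> * q * P) + 1) * (real P * (H * sieve_main \<alpha> \<beta> a q + sieve_error \<alpha> \<beta> a q))"
proof -
  let ?Pr = "primes_upto \<alpha>" and ?Ps = "primes_upto \<beta>"
  define N where "N = nat \<lfloor>(T + 1) / \<alpha>\<rfloor>"
  define C where "C h = card {n. n < q * P \<and> admissible ?Pr ?Ps a q h n}" for h
  have "\<alpha> > 0" "P > 0"
    using assms(1,2) prod_primes_upto_pos by (auto simp: P_def)
  have "0 \<le> (T + 1) / (\<alpha> * q * P)"
    using \<open>\<alpha> > 0\<close> \<open>P > 0\<close> assms(3,6) by (intro divide_nonneg_pos) auto
  have "real (N div (q * P)) \<le> (T + 1) / (\<alpha> * q * P)"
  proof -
    have "real (N div (q * P)) \<le> real N / real (q * P)"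
      by (rule of_nat_div_le_of_nat)
    also have "\<dots> \<le> ((T + 1) / \<alpha>) / real (q * P)"
      using assms(6) \<open>\<alpha> > 0\<close> by (intro divide_right_mono) (auto simp: N_def)
    finally show ?thesis
      by (simp add: field_simps)
  qed
  have count: "real (card {n. 1 \<le> n \<and> n \<le> N \<and> admissible ?Pr ?Ps a q h n})
      \<le> ((T + 1) / (\<alpha> * q * P) + 1) * real (C h)" for h
  proof -
    have "card {n. 1 \<le> n \<and> n \<le> N \<and> admissible ?Pr ?Ps a q h n} \<le> (N div (q * P) + 1) * C h"
      unfolding C_def P_def using assms(2,3) \<open>P > 0\<close>
      by (intro card_periodic_atMost_le admissible_periodic finite_primes_upto primes_upto_mono)
        (simp_all add: P_def)
    then have "real (card {n. 1 \<le> n \<and> n \<le> N \<and> admissible ?Pr ?Ps a q h n}) \<le> (real (N div (q * P)) + 1) * real (C h)"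
      by (metis of_nat_1 of_nat_add of_nat_le_iff of_nat_mult)
    also have "\<dots> \<le> ((T + 1) / (\<alpha> * q * P) + 1) * real (C h)"
      using \<open>real (N div (q * P)) \<le> _\<close> by (intro mult_right_mono) auto
    finally show ?thesis .
  qed
  have "measure lebesgue (Nset \<alpha> \<inter> Nset \<beta> \<inter> {0..T})
      \<le> (\<Sum>h\<in>{-\<lceil>H\<rceil>..\<lceil>H\<rceil>}. tent H h * real (card {n. 1 \<le> n \<and> n \<le> N \<and> admissible ?Pr ?Ps a q h n}))"
    unfolding H_def N_def by (rule measure_Nset_Int_le [OF assms(1,3,5,2)])
  also have "\<dots> \<le> (\<Sum>h\<in>{-\<lceil>H\<rceil>..\<lceil>H\<rceil>}. tent H h * (((T + 1) / (\<alpha> * q * P) + 1) * real (C h)))"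
    by (intro sum_mono mult_left_mono count tent_nonneg)
  also have "\<dots> = ((T + 1) / (\<alpha> * q * P) + 1) * (\<Sum>h\<in>{-\<lceil>H\<rceil>..\<lceil>H\<rceil>}. tent H h * real (C h))"
    by (simp add: sum_distrib_left mult_ac)
  also have "\<dots> \<le> ((T + 1) / (\<alpha> * q * P) + 1) * (real P * (H * sieve_main \<alpha> \<beta> a q + sieve_error \<alpha> \<beta> a q))"
    unfolding C_def P_def H_def using assms(1-4) \<open>0 \<le> (T + 1) / (\<alpha> * q * P)\<close>
    by (intro mult_left_mono sum_tent_card_admissible_le) (auto simp: P_def)
  finally show ?thesis .
qed

lemma Limsup_correlation_le:
  fixes \<alpha> \<beta> :: real and a q :: nat
  assumes "2 \<le> \<beta>" "\<beta> < \<alpha>" "q > 0" "coprime a q" "\<alpha> = real a * \<beta> / real q"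
  shows "Limsup at_top (\<lambda>T. ereal (PT T (Nset \<alpha> \<inter> Nset \<beta>) / (PT T (Nset \<alpha>) * PT T (Nset \<beta>))))
    \<le> ereal (1 + \<beta> * \<beta> * 3 ^ card (exceptional_primes \<alpha> \<beta> a q) / real q)"
proof -
  define P where "P = real (\<Prod>(primes_upto \<alpha>))"
  define M where "M = real (\<Prod>(primes_upto \<beta>))"
  define \<phi>P where "\<phi>P = (\<Prod>p\<in>primes_upto \<alpha>. real p - 1)"
  define \<phi>M where "\<phi>M = (\<Prod>p\<in>primes_upto \<beta>. real p - 1)"
  define H where "H = real q / \<beta>"
  define D where "D = P * (H * sieve_main \<alpha> \<beta> a q + sieve_error \<alpha> \<beta> a q)"
  have pos: "\<alpha> > 0" "\<beta> > 0" "P > 0" "M > 0" "\<phi>P > 0" "\<phi>M > 0"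
    using assms(1,2) prod_primes_upto_pos prod_primes_upto_pred_pos
    by (auto simp: P_def M_def \<phi>P_def \<phi>M_def simp del: of_nat_prod)
  have main: "sieve_main \<alpha> \<beta> a q = (\<phi>P / P) * (\<phi>M / M)"
    using sieve_main_eq [of \<beta> \<alpha> a q] assms(2) by (simp add: P_def M_def \<phi>P_def \<phi>M_def prod_dividef)
  have "Limsup at_top (\<lambda>T. ereal (PT T (Nset \<alpha> \<inter> Nset \<beta>) / (PT T (Nset \<alpha>) * PT T (Nset \<beta>))))
      \<le> ereal ((D / (\<alpha> * q * P)) / ((\<phi>P / (\<alpha> * P)) * (\<phi>M / (\<beta> * M))))"
    unfolding PT_def
  proof (rule Limsup_ratio_le [of _ _ 1])
    fix T :: real assume "T \<ge> 1"
    have "measure lebesgue (Nset \<alpha> \<inter> Nset \<beta> \<inter> {0..T}) \<le> ((T + 1) / (\<alpha> * q * P) + 1) * D"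
      using measure_Nset_Int_le_affine [OF _ _ assms(3,4,5) \<open>T \<ge> 1\<close>] pos assms(2)
      by (simp add: D_def H_def P_def)
    also have "\<dots> = T * (D / (\<alpha> * q * P)) + (D / (\<alpha> * q * P) + D)"
      using pos assms(3) by (simp add: field_simps)
    finally show "0 \<le> measure lebesgue (Nset \<alpha> \<inter> Nset \<beta> \<inter> {0..T})
        \<and> measure lebesgue (Nset \<alpha> \<inter> Nset \<beta> \<inter> {0..T}) \<le> T * (D / (\<alpha> * q * P)) + (D / (\<alpha> * q * P) + D)"
      by simp
    show "T * (\<phi>P / (\<alpha> * P)) - \<phi>P * (1 / (2 * \<alpha> * P) + 1 / P + 1) \<le> measure lebesgue (Nset \<alpha> \<inter> {0..T})"
      using measure_Nset_ge [of \<alpha> T] assms(1,2) \<open>T \<ge> 1\<close> by (simp add: P_def \<phi>P_def)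
    show "T * (\<phi>M / (\<beta> * M)) - \<phi>M * (1 / (2 * \<beta> * M) + 1 / M + 1) \<le> measure lebesgue (Nset \<beta> \<inter> {0..T})"
      using measure_Nset_ge [of \<beta> T] assms(1) \<open>T \<ge> 1\<close> by (simp add: M_def \<phi>M_def)
  qed (use pos in simp_all)
  also have "(D / (\<alpha> * q * P)) / ((\<phi>P / (\<alpha> * P)) * (\<phi>M / (\<beta> * M)))
      = 1 + (\<beta> / q) * (sieve_error \<alpha> \<beta> a q / sieve_main \<alpha> \<beta> a q)"
    using pos assms(3) by (simp add: D_def H_def main field_simps)
  also have "\<dots> \<le> 1 + (\<beta> / q) * (\<beta> * 3 ^ card (exceptional_primes \<alpha> \<beta> a q))"
    using sieve_error_le [OF assms(1)] sieve_main_pos [of \<beta> \<alpha> a q] assms(2,3) pos(2)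
    by (intro add_left_mono mult_left_mono) (simp_all add: divide_le_eq mult.commute)
  finally show ?thesis
    by (simp add: mult.assoc)
qed

section \<open>The exceptional primes\<close>

lemma power_card_prime_factors_le:
  fixes K N :: nat
  assumes "K \<ge> 1" "N > 0"
  shows "K ^ card (prime_factors N) \<le> K ^ K * N"
proof -
  define A where "A = {p \<in> prime_factors N. p < K}"
  define B where "B = {p \<in> prime_factors N. K \<le> p}"
  have AB: "prime_factors N = A \<union> B" "A \<inter> B = {}" "finite A" "finite B"
    by (auto simp: A_def B_def)
  have "card A \<le> card {..<K}"
    by (rule card_mono) (auto simp: A_def)
  then have "K ^ card A \<le> K ^ K"
    using assms(1) by (intro power_increasing) auto
  have B_primes: "\<forall>p\<in>B. prime p" and B_dvd: "\<forall>p\<in>B. int p dvd int N"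
    by (simp_all add: B_def in_prime_factors_iff)
  have "(\<Prod>p\<in>B. int p) dvd int N"
    using prod_primes_dvd_iff [OF AB(4) B_primes] B_dvd by blast
  then have "int (\<Prod>B) dvd int N"
    by (simp only: of_nat_prod)
  then have "\<Prod>B \<le> N"
    using assms(2) by (simp only: of_nat_dvd_iff) (rule dvd_imp_le)
  moreover have "(\<Prod>p\<in>B. K) \<le> (\<Prod>p\<in>B. p)"
    by (rule prod_mono) (simp add: B_def)
  ultimately have "K ^ card B \<le> N"
    by simp
  have "K ^ card (prime_factors N) = K ^ card A * K ^ card B"
    using AB by (simp add: card_Un_disjoint power_add)
  also have "\<dots> \<le> K ^ K * N"
    using \<open>K ^ card A \<le> K ^ K\<close> \<open>K ^ card B \<le> N\<close> by (rule mult_mono) simp_all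
  finally show ?thesis .
qed

lemma power_mult_powr_le:
  fixes c x :: real
  assumes c: "0 < c" "c < 1" and x: "x \<ge> 0"
  shows "x ^ n * c powr x \<le> (real n / - ln c + 1) ^ n"
proof (cases "n = 0")
  case True
  have "c powr x \<le> 1"
    using c x by (simp add: powr_le1)
  then show ?thesis
    using True by simp
next
  case False
  define k where "k = - ln c"
  have k: "k > 0"
    unfolding k_def using c by simp
  have cp: "c powr x = exp (- k * x)"
    unfolding k_def powr_def using c by simp
  have n: "real n > 0"
    using False by simp
  define y where "y = k * x / real n"
  have y: "y \<ge> 0"
    unfolding y_def using k x n by simp
  have "x ^ n = (real n / k) ^ n * y ^ n"
    unfolding y_def using k n by (simp add: power_mult_distrib [symmetric])
  also have "\<dots> \<le> (real n / k) ^ n * exp y ^ n"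
  proof -
    have "y \<le> exp y"
      using exp_ge_add_one_self [of y] by linarith
    then show ?thesis
      using y k n by (intro mult_left_mono power_mono) auto
  qed
  also have "exp y ^ n = exp (k * x)"
    unfolding y_def using n by (simp add: exp_of_nat_mult [symmetric])
  finally have "x ^ n * c powr x \<le> (real n / k) ^ n * exp (k * x) * exp (- k * x)"
    unfolding cp by (intro mult_right_mono) auto
  also have "\<dots> = (real n / k) ^ n"
    by (simp add: exp_minus_inverse mult.assoc exp_add [symmetric])
  also have "\<dots> \<le> (real n / k + 1) ^ n"
    using k by (intro power_mono) auto
  finally show ?thesis
    by (simp add: k_def)
qed

lemma power_seven_mult_power_five_le:
  fixes \<alpha> \<beta> q :: real
  assumes "0 < \<beta>" "\<beta> \<le> \<alpha>" "\<beta> * \<alpha>\<^sup>2 \<le> q"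
  shows "\<alpha> ^ 7 * \<beta> ^ 5 \<le> q ^ 4"
proof -
  have "\<alpha> > 0"
    using assms(1,2) by simp
  have "(\<beta> * \<alpha>\<^sup>2) ^ 4 \<le> q ^ 4"
    using assms \<open>\<alpha> > 0\<close> by (intro power_mono) auto
  then have "\<beta> ^ 4 * \<alpha> ^ 8 \<le> q ^ 4"
    by (simp add: power_mult_distrib power_mult [symmetric])
  moreover have "(\<beta> ^ 4 * \<alpha> ^ 7) * \<beta> \<le> (\<beta> ^ 4 * \<alpha> ^ 7) * \<alpha>"
    using assms(1,2) \<open>\<alpha> > 0\<close> by (intro mult_left_mono) auto
  then have "\<alpha> ^ 7 * \<beta> ^ 5 \<le> \<beta> ^ 4 * \<alpha> ^ 8"
    by (simp add: algebra_simps power_Suc [symmetric] power_add [symmetric] eval_nat_numeral)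
  ultimately show ?thesis
    by linarith
qed

lemma weight_le_of_sixth_power_le:
  fixes \<alpha> \<beta> a q X C :: real
  assumes "0 < \<beta>" "\<beta> \<le> \<alpha>" "0 < q" "a = \<alpha> * q / \<beta>" "\<beta> * \<alpha>\<^sup>2 \<le> q" "0 \<le> X"
    and "X ^ 6 \<le> C * a * q" "1 \<le> C"
  shows "\<beta> * \<beta> * X / q \<le> C * \<beta> / \<alpha>"
proof (rule ccontr)
  assume "\<not> ?thesis"
  then have lt: "C * \<beta> / \<alpha> < \<beta> * \<beta> * X / q"
    by simp
  have "\<alpha> > 0"
    using assms(1,2) by simp
  define Y where "Y = C * q / (\<beta> * \<alpha>)"
  have "Y \<ge> 0"
    using assms(1,3,8) \<open>\<alpha> > 0\<close> by (simp add: Y_def)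
  have "C * \<beta> / \<alpha> * (q / (\<beta> * \<beta>)) < \<beta> * \<beta> * X / q * (q / (\<beta> * \<beta>))"
    using lt assms(1,3) by (intro mult_strict_right_mono) auto
  then have "Y < X"
    using assms(1,3) \<open>\<alpha> > 0\<close> by (simp add: Y_def field_simps)
  then have "Y ^ 6 < X ^ 6"
    using \<open>Y \<ge> 0\<close> by (intro power_strict_mono) auto
  have "C \<le> C ^ 6"
    using assms(8) by (simp add: power_increasing [of 1 6 C, simplified])
  then have "C * (\<alpha> ^ 7 * \<beta> ^ 5) * q\<^sup>2 \<le> C ^ 6 * q ^ 4 * q\<^sup>2"
    using power_seven_mult_power_five_le [OF assms(1,2,5)] assms(3,8) \<open>\<alpha> > 0\<close> assms(1)
    by (intro mult_right_mono mult_mono) auto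
  have "\<alpha> ^ 7 = \<alpha> * \<alpha> ^ 6" "\<beta> ^ 6 = \<beta> * \<beta> ^ 5"
    using power_add [of \<alpha> 1 6] power_add [of \<beta> 1 5] by simp_all
  then have "C * a * q = (C * (\<alpha> ^ 7 * \<beta> ^ 5) * q\<^sup>2) / (\<beta> ^ 6 * \<alpha> ^ 6)"
    using assms(1,4) \<open>\<alpha> > 0\<close> by (simp add: field_simps power2_eq_square)
  also have "\<dots> \<le> (C ^ 6 * q ^ 4 * q\<^sup>2) / (\<beta> ^ 6 * \<alpha> ^ 6)"
    using \<open>C * (\<alpha> ^ 7 * \<beta> ^ 5) * q\<^sup>2 \<le> _\<close> assms(1) \<open>\<alpha> > 0\<close> by (intro divide_right_mono) auto
  also have "\<dots> = Y ^ 6"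
  proof -
    have "C ^ 6 * q ^ 4 * q\<^sup>2 = (C * q) ^ 6"
      by (simp add: power_mult_distrib mult.assoc power_add [symmetric])
    moreover have "\<beta> ^ 6 * \<alpha> ^ 6 = (\<beta> * \<alpha>) ^ 6"
      by (simp add: power_mult_distrib)
    ultimately show ?thesis
      by (simp add: Y_def power_divide)
  qed
  finally show False
    using \<open>Y ^ 6 < X ^ 6\<close> assms(7) by linarith
qed

lemma weight_le_of_square_le:
  fixes \<beta> q s t X K :: real
  assumes b: "2 \<le> \<beta>" and qb: "\<beta> * 10 powr \<beta> \<le> q" and X: "0 \<le> X" "X \<le> s * t"
    and st: "0 \<le> s" "0 \<le> t" and s2: "s\<^sup>2 \<le> 9 powr \<beta>" and t2: "t\<^sup>2 \<le> 9 ^ 9 * q"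
    and K: "\<beta> ^ 5 * (9/10) powr \<beta> \<le> K"
  shows "\<beta> * \<beta> * X / q \<le> (9 ^ 9 * K + 1) / \<beta>"
proof -
  define W where "W = \<beta> ^ 3 * X / q"
  have "\<beta> > 0" "10 powr \<beta> > 0"
    using b by simp_all
  then have "q > 0"
    using qb mult_pos_pos [of \<beta> "10 powr \<beta>"] by linarith
  have "0 \<le> \<beta> ^ 5 * (9/10) powr \<beta>"
    using \<open>\<beta> > 0\<close> by simp
  then have "K \<ge> 0"
    using K by linarith
  have "X\<^sup>2 \<le> (s * t)\<^sup>2"
    using X by (intro power_mono) auto
  also have "\<dots> \<le> 9 powr \<beta> * (9 ^ 9 * q)"
    using s2 t2 by (simp add: power_mult_distrib mult_mono)
  finally have X2: "X\<^sup>2 \<le> 9 powr \<beta> * (9 ^ 9 * q)" .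
  have "W\<^sup>2 = \<beta> ^ 6 * X\<^sup>2 / q\<^sup>2"
    unfolding W_def by (simp add: power_mult_distrib power_divide power_mult [symmetric])
  also have "\<dots> \<le> \<beta> ^ 6 * (9 powr \<beta> * (9 ^ 9 * q)) / q\<^sup>2"
    using X2 \<open>\<beta> > 0\<close> by (intro divide_right_mono mult_left_mono) auto
  also have "\<dots> = 9 ^ 9 * (\<beta> ^ 6 * 9 powr \<beta>) / q"
    using \<open>q > 0\<close> by (simp add: field_simps power2_eq_square)
  also have "\<dots> \<le> 9 ^ 9 * (\<beta> ^ 6 * 9 powr \<beta>) / (\<beta> * 10 powr \<beta>)"
    using qb \<open>\<beta> > 0\<close> \<open>10 powr \<beta> > 0\<close> \<open>q > 0\<close> by (intro divide_left_mono) auto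
  also have "\<dots> = 9 ^ 9 * (\<beta> ^ 5 * (9/10) powr \<beta>)"
    using \<open>\<beta> > 0\<close> by (simp add: powr_divide field_simps eval_nat_numeral)
  also have "\<dots> \<le> 9 ^ 9 * K"
    using K by simp
  finally have W2: "W\<^sup>2 \<le> 9 ^ 9 * K" .
  have "W \<le> 9 ^ 9 * K + 1"
  proof (rule ccontr)
    assume "\<not> W \<le> 9 ^ 9 * K + 1"
    then have "(9 ^ 9 * K + 1)\<^sup>2 < W\<^sup>2"
      using \<open>K \<ge> 0\<close> by (intro power_strict_mono) auto
    moreover have "9 ^ 9 * K + 1 \<le> (9 ^ 9 * K + 1)\<^sup>2"
      using \<open>K \<ge> 0\<close> by (simp add: power2_eq_square)
    ultimately show False
      using W2 by linarith
  qed
  then have "W / \<beta> \<le> (9 ^ 9 * K + 1) / \<beta>"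
    using \<open>\<beta> > 0\<close> by (intro divide_right_mono) auto
  moreover have "W / \<beta> = \<beta> * \<beta> * X / q"
    unfolding W_def power3_eq_cube using \<open>\<beta> > 0\<close> by (simp add: field_simps)
  ultimately show ?thesis
    by simp
qed

lemma bracket_ge_imp_lowest_terms:
  fixes \<alpha> \<beta> :: real
  assumes "\<beta> > 0" "\<alpha> > \<beta>" "\<alpha> / \<beta> \<in> \<rat>"
    and "bracket \<alpha> \<beta> \<ge> ereal (min (\<alpha>\<^sup>2) (10 powr \<beta>))"
  shows "\<exists>a q :: nat. a > 0 \<and> q > 0 \<and> coprime a q \<and> \<alpha> = real a * \<beta> / real q
      \<and> \<beta> * min (\<alpha>\<^sup>2) (10 powr \<beta>) \<le> real q"
proof -
  obtain r where r: "\<alpha> / \<beta> = of_rat r"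
    using assms(3) by (auto elim: Rats_cases)
  have the_r: "(THE r'::rat. of_rat r' = \<alpha> / \<beta>) = r"
    by (rule the_equality) (auto simp: r)
  obtain A D where AD: "quotient_of r = (A, D)"
    by (cases "quotient_of r")
  have "D > 0" "coprime A D" "r = of_int A / of_int D"
    using quotient_of_denom_pos [OF AD] quotient_of_coprime [OF AD] quotient_of_div [OF AD] by simp_all
  then have ratio: "\<alpha> / \<beta> = real_of_int A / real_of_int D"
    unfolding r by (simp add: of_rat_divide)
  have "\<alpha> / \<beta> > 1"
    using assms(1,2) by simp
  then have "A > D"
    using \<open>D > 0\<close> unfolding ratio by (simp add: field_simps)
  then have "A > 0"
    using \<open>D > 0\<close> by simp
  have \<alpha>: "\<alpha> = real_of_int A * \<beta> / real_of_int D"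
    using ratio assms(1) \<open>D > 0\<close> by (simp add: field_simps)
  have "height (\<alpha> / \<beta>) = ereal (real_of_int A)"
    unfolding height_def using assms(3) the_r AD \<open>A > D\<close> by simp
  then have "bracket \<alpha> \<beta> = ereal (real_of_int A / \<alpha>)"
    unfolding bracket_def using assms(1,2) by simp
  then have "ereal (min (\<alpha>\<^sup>2) (10 powr \<beta>)) \<le> ereal (real_of_int A / \<alpha>)"
    using assms(4) by (simp only:)
  then have "min (\<alpha>\<^sup>2) (10 powr \<beta>) \<le> real_of_int A / \<alpha>"
    by (simp only: ereal_less_eq(3))
  also have "real_of_int A / \<alpha> = real_of_int D / \<beta>"
    unfolding \<alpha> using \<open>A > 0\<close> \<open>D > 0\<close> assms(1) by (simp add: field_simps)
  finally have "\<beta> * min (\<alpha>\<^sup>2) (10 powr \<beta>) \<le> real_of_int D"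
    using assms(1) by (simp add: field_simps)
  moreover have "coprime (nat A) (nat D)"
    using \<open>coprime A D\<close> \<open>A > 0\<close> \<open>D > 0\<close> by (metis coprime_int_iff int_nat_eq less_imp_le)
  ultimately show ?thesis
    using \<open>A > 0\<close> \<open>D > 0\<close> \<alpha> by (intro exI [of _ "nat A"] exI [of _ "nat D"]) auto
qed

lemma power_power_commute: "(x ^ k) ^ m = (x ^ m) ^ k" for x :: "'a::monoid_mult"
  by (simp add: power_mult [symmetric] mult.commute)

lemma card_exceptional_primes_le_prime_factors:
  assumes "a > 0" "q > 0"
  shows "card (exceptional_primes \<alpha> \<beta> a q) \<le> card (prime_factors (a * q))"
proof (rule card_mono)
  show "exceptional_primes \<alpha> \<beta> a q \<subseteq> prime_factors (a * q)"
  proof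
    fix p assume "p \<in> exceptional_primes \<alpha> \<beta> a q"
    then have "prime p" "p dvd a * q"
      by (auto simp: exceptional_primes_def primes_upto_def)
    then show "p \<in> prime_factors (a * q)"
      using assms by (simp add: in_prime_factors_iff)
  qed
qed simp

lemma card_exceptional_primes_le_primes_upto:
  assumes "q > 0"
  shows "card (exceptional_primes \<alpha> \<beta> a q) \<le> card (primes_upto \<beta>) + card (prime_factors q)"
proof -
  have "exceptional_primes \<alpha> \<beta> a q \<subseteq> primes_upto \<beta> \<union> prime_factors q"
    using assms by (auto simp: exceptional_primes_def primes_upto_def in_prime_factors_iff)
  then have "card (exceptional_primes \<alpha> \<beta> a q) \<le> card (primes_upto \<beta> \<union> prime_factors q)"
    by (intro card_mono) (simp_all add: finite_primes_upto)
  also have "\<dots> \<le> card (primes_upto \<beta>) + card (prime_factors q)"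
    by (rule card_Un_le)
  finally show ?thesis .
qed

lemma card_primes_upto_le:
  assumes "\<beta> \<ge> 0"
  shows "real (card (primes_upto \<beta>)) \<le> \<beta>"
proof -
  have "primes_upto \<beta> \<subseteq> {1..nat \<lfloor>\<beta>\<rfloor>}"
    by (auto simp: primes_upto_def le_nat_floor Suc_le_eq prime_gt_0_nat)
  then have "card (primes_upto \<beta>) \<le> nat \<lfloor>\<beta>\<rfloor>"
    using card_mono [of "{1..nat \<lfloor>\<beta>\<rfloor>}"] by fastforce
  then show ?thesis
    using assms by linarith
qed

lemma exceptional_weight_le_of_height_ge_square:
  assumes "2 \<le> \<beta>" "\<beta> < \<alpha>" "a > 0" "q > 0" "\<alpha> = real a * \<beta> / real q" "\<beta> * \<alpha>\<^sup>2 \<le> real q"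
  shows "\<beta> * \<beta> * 3 ^ card (exceptional_primes \<alpha> \<beta> a q) / real q \<le> 729 ^ 729 * \<beta> / \<alpha>"
proof -
  let ?k = "card (exceptional_primes \<alpha> \<beta> a q)"
  define K :: nat where "K = 729"
  have "K \<ge> 1"
    by (simp add: K_def)
  have "K ^ ?k \<le> K ^ card (prime_factors (a * q))"
    using card_exceptional_primes_le_prime_factors [OF assms(3,4)] \<open>K \<ge> 1\<close>
    by (intro power_increasing) auto
  also have "\<dots> \<le> K ^ K * (a * q)"
    using assms(3,4) \<open>K \<ge> 1\<close> by (intro power_card_prime_factors_le) auto
  finally have "real (K ^ ?k) \<le> real (K ^ K * (a * q))"
    by (simp only: of_nat_le_iff)
  then have "real (K ^ ?k) \<le> real (K ^ K) * real a * real q"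
    by (simp only: of_nat_mult mult.assoc)
  moreover have "((3::real) ^ ?k) ^ 6 = real (K ^ ?k)"
    by (subst power_power_commute) (simp add: K_def)
  ultimately have X6: "((3::real) ^ ?k) ^ 6 \<le> real (K ^ K) * real a * real q"
    by linarith
  have a_eq: "real a = \<alpha> * real q / \<beta>"
    using assms(1,4,5) by (simp add: field_simps)
  have "real (K ^ K) \<ge> 1"
    using \<open>K \<ge> 1\<close> by simp
  have "\<beta> * \<beta> * 3 ^ ?k / real q \<le> real (K ^ K) * \<beta> / \<alpha>"
    by (rule weight_le_of_sixth_power_le [OF _ _ _ a_eq assms(6) _ X6 \<open>real (K ^ K) \<ge> 1\<close>]) (use assms in auto)
  moreover have "real (K ^ K) = 729 ^ 729"
    by (simp only: K_def of_nat_power of_nat_numeral)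
  ultimately show ?thesis
    by (simp only:)
qed

lemma exceptional_weight_le_of_height_ge_exp:
  assumes "2 \<le> \<beta>" "q > 0" "\<beta> * 10 powr \<beta> \<le> real q" "\<beta> ^ 5 * (9/10) powr \<beta> \<le> K"
  shows "\<beta> * \<beta> * 3 ^ card (exceptional_primes \<alpha> \<beta> a q) / real q \<le> (9 ^ 9 * K + 1) / \<beta>"
proof -
  define s :: real where "s = 3 ^ card (primes_upto \<beta>)"
  define t :: real where "t = 3 ^ card (prime_factors q)"
  have X: "(3::real) ^ card (exceptional_primes \<alpha> \<beta> a q) \<le> s * t"
    using card_exceptional_primes_le_primes_upto [OF assms(2), of \<alpha> \<beta> a]
    by (simp add: s_def t_def power_add [symmetric] power_increasing)
  have s2: "s\<^sup>2 \<le> 9 powr \<beta>"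
  proof -
    have "s\<^sup>2 = 9 ^ card (primes_upto \<beta>)"
      unfolding s_def by (subst power_power_commute) simp
    also have "\<dots> = 9 powr real (card (primes_upto \<beta>))"
      by (simp add: powr_realpow)
    also have "\<dots> \<le> 9 powr \<beta>"
      using card_primes_upto_le [of \<beta>] assms(1) by (intro powr_mono) auto
    finally show ?thesis .
  qed
  have t2: "t\<^sup>2 \<le> 9 ^ 9 * real q"
  proof -
    have "(9::nat) ^ card (prime_factors q) \<le> 9 ^ 9 * q"
      using assms(2) by (intro power_card_prime_factors_le) auto
    then have "real ((9::nat) ^ card (prime_factors q)) \<le> real (9 ^ 9 * q)"
      by (simp only: of_nat_le_iff)
    moreover have "t\<^sup>2 = 9 ^ card (prime_factors q)"
      unfolding t_def by (subst power_power_commute) simp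
    ultimately show ?thesis
      by simp
  qed
  show ?thesis
    by (rule weight_le_of_square_le [OF assms(1,3) _ X _ _ s2 t2 assms(4)]) (simp_all add: s_def t_def)
qed

definition weight_constant :: real where
  "weight_constant = max (9 ^ 9 * (5 / - ln (9/10) + 1) ^ 5 + 1) (729 ^ 729)"

lemma weight_constant_pos: "weight_constant > 0"
proof -
  have "ln (9/10) < (0::real)"
    by simp
  then have "0 < 5 / - ln (9/10) + (1::real)"
    by (intro add_pos_pos divide_pos_pos) auto
  then have "0 < 9 ^ 9 * (5 / - ln (9/10) + 1) ^ 5 + (1::real)"
    by (intro add_nonneg_pos mult_nonneg_nonneg zero_le_power) auto
  then show ?thesis
    unfolding weight_constant_def by (rule max.strict_coboundedI1)
qed

lemma weight_constant_ge:
  "9 ^ 9 * (5 / - ln (9/10) + 1) ^ 5 + 1 \<le> weight_constant"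
  "729 ^ 729 \<le> weight_constant"
  unfolding weight_constant_def by (rule max.cobounded1, rule max.cobounded2)

lemma exceptional_weight_le:
  assumes "2 \<le> \<beta>" "\<beta> < \<alpha>" "a > 0" "q > 0" "\<alpha> = real a * \<beta> / real q"
    and "\<beta> * min (\<alpha>\<^sup>2) (10 powr \<beta>) \<le> real q"
  shows "\<beta> * \<beta> * 3 ^ card (exceptional_primes \<alpha> \<beta> a q) / real q
    \<le> weight_constant * (\<beta> / \<alpha> + 1 / \<beta>)"
proof -
  have "0 < \<beta> / \<alpha>" "0 < 1 / \<beta>"
    using assms(1,2) by auto
  show ?thesis
  proof (cases "\<alpha>\<^sup>2 \<le> 10 powr \<beta>")
    case True
    then have "\<beta> * \<alpha>\<^sup>2 \<le> real q"
      using assms(6) by (simp add: min_def)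
    then have "\<beta> * \<beta> * 3 ^ card (exceptional_primes \<alpha> \<beta> a q) / real q \<le> 729 ^ 729 * \<beta> / \<alpha>"
      by (rule exceptional_weight_le_of_height_ge_square [OF assms(1-5)])
    also have "\<dots> = 729 ^ 729 * (\<beta> / \<alpha>)"
      by (rule times_divide_eq_right [symmetric])
    also have "\<dots> \<le> weight_constant * (\<beta> / \<alpha> + 1 / \<beta>)"
      by (rule mult_mono [OF weight_constant_ge(2)])
        (use \<open>0 < \<beta> / \<alpha>\<close> \<open>0 < 1 / \<beta>\<close> weight_constant_pos in simp_all)
    finally show ?thesis .
  next
    case False
    then have "\<beta> * 10 powr \<beta> \<le> real q"
      using assms(6) by (simp add: min_def)
    moreover have "\<beta> ^ 5 * (9/10) powr \<beta> \<le> (5 / - ln (9/10) + 1) ^ 5"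
      using power_mult_powr_le [of "9/10" \<beta> 5] assms(1) by simp
    ultimately have "\<beta> * \<beta> * 3 ^ card (exceptional_primes \<alpha> \<beta> a q) / real q
        \<le> (9 ^ 9 * (5 / - ln (9/10) + 1) ^ 5 + 1) * (1 / \<beta>)"
      using exceptional_weight_le_of_height_ge_exp [OF assms(1,4)] by simp
    also have "\<dots> \<le> weight_constant * (\<beta> / \<alpha> + 1 / \<beta>)"
      by (rule mult_mono [OF weight_constant_ge(1)])
        (use \<open>0 < \<beta> / \<alpha>\<close> \<open>0 < 1 / \<beta>\<close> weight_constant_pos in simp_all)
    finally show ?thesis .
  qed
qed

lemma div_le_ln_double_div:
  fixes \<alpha> \<beta> :: real
  assumes "2 \<le> \<beta>" "0 < \<alpha>"
  shows "\<beta> / \<alpha> \<le> ln (2 * \<beta>) / (\<alpha> / \<beta>)"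
proof -
  have "exp 1 \<le> 2 * \<beta>"
    using exp_le assms(1) by linarith
  then have "1 \<le> ln (2 * \<beta>)"
    using assms(1) by (subst ln_ge_iff) auto
  then have "1 * (\<beta> / \<alpha>) \<le> ln (2 * \<beta>) * (\<beta> / \<alpha>)"
    using assms by (intro mult_right_mono) auto
  then show ?thesis
    by simp
qed

theorem lemma2p9:
  "\<exists>c::real. c > 0 \<and>
     (\<forall>\<alpha> \<beta> :: real. \<alpha> > \<beta> \<longrightarrow> \<beta> \<ge> 2 \<longrightarrow>
        \<alpha> / \<beta> \<in> \<rat> \<longrightarrow> \<alpha> / \<beta> \<notin> \<nat> \<longrightarrow>
        bracket \<alpha> \<beta> \<ge> ereal (min (\<alpha>^2) (10 powr \<beta>)) \<longrightarrow>
        Limsup at_top (\<lambda>T. ereal (PT T (Nset \<alpha> \<inter> Nset \<beta>) /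
                                   (PT T (Nset \<alpha>) * PT T (Nset \<beta>))))
          \<le> ereal (1 + c * (ln (2 * \<beta>) / (\<alpha> / \<beta>) + 1 / \<beta>)))"
proof (intro exI [of _ weight_constant] conjI allI impI)
  show "weight_constant > 0"
    by (rule weight_constant_pos)
  fix \<alpha> \<beta> :: real
  assume "\<alpha> > \<beta>" "\<beta> \<ge> 2" "\<alpha> / \<beta> \<in> \<rat>" "\<alpha> / \<beta> \<notin> \<nat>"
    and "bracket \<alpha> \<beta> \<ge> ereal (min (\<alpha>^2) (10 powr \<beta>))"
  then obtain a q :: nat where "a > 0" "q > 0" "coprime a q" "\<alpha> = real a * \<beta> / real q"
    and "\<beta> * min (\<alpha>\<^sup>2) (10 powr \<beta>) \<le> real q"
    using bracket_ge_imp_lowest_terms [of \<beta> \<alpha>] by auto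
  have "Limsup at_top (\<lambda>T. ereal (PT T (Nset \<alpha> \<inter> Nset \<beta>) / (PT T (Nset \<alpha>) * PT T (Nset \<beta>))))
      \<le> ereal (1 + \<beta> * \<beta> * 3 ^ card (exceptional_primes \<alpha> \<beta> a q) / real q)"
    by (rule Limsup_correlation_le) fact+
  also have "\<beta> * \<beta> * 3 ^ card (exceptional_primes \<alpha> \<beta> a q) / real q
      \<le> weight_constant * (\<beta> / \<alpha> + 1 / \<beta>)"
    by (rule exceptional_weight_le) fact+
  also have "\<dots> \<le> weight_constant * (ln (2 * \<beta>) / (\<alpha> / \<beta>) + 1 / \<beta>)"
    using div_le_ln_double_div [of \<beta> \<alpha>] weight_constant_pos \<open>\<alpha> > \<beta>\<close> \<open>\<beta> \<ge> 2\<close>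
    by (intro mult_left_mono) auto
  finally show "Limsup at_top (\<lambda>T. ereal (PT T (Nset \<alpha> \<inter> Nset \<beta>) / (PT T (Nset \<alpha>) * PT T (Nset \<beta>))))
      \<le> ereal (1 + weight_constant * (ln (2 * \<beta>) / (\<alpha> / \<beta>) + 1 / \<beta>))"
    by simp
qed

end
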